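(* Let $T$ be a necklace and $a\preccurlyeq b$ vertices of $T$. Then the object $\iota^T_{a,b}:T_{[a,b]}\hookrightarrow T_{a,b}$ is terminal in the category $\mathcal{N}ec/T_{a,b}$.
   Context: Cubical sets: presheaves on the category $\square$ with objects $[1]^n$ and morphisms generated by faces $\partial_{i,\epsilon}$ (insert $\epsilon$ at coordinate $i$), degeneracies (delete a coordinate) and negative connections ($\gamma_{i,0}$ replaces $(x_i,x_{i+1})$ by $\max(x_i,x_{i+1})$); $\square^n$ is representable, with vertices the subsets of $\{1,\dots,n\}$, $\alpha=\emptyset$, $\omega=\{1,\dots,n\}$. For $a\subseteq b$ in $\square^n$, $d(a,b)=|b\setminus a|$ and $\iota^n_{a,b}:\square^{d(a,b)}\hookrightarrow\square^n$ is the (composite of faces) map with $\iota^n_{a,b}(\alpha)=a$, $\iota^n_{a,b}(\omega)=b$, which inserts the coordinates of $a$ and $\{1,\dots,n\}\setminus b$ as constants and the free coordinates in the positions of $b\setminus a$ in increasing order. Necklaces: for double-pointed cubical sets $X_{a,b},Y_{u,v}$, $X\vee Y$ is the pushout identifying $b$ with $u$, pointed by $(a,v)$; for maps $f:S_{a,b}\to X_{u,v}$, $g:S'_{a',b'}\to X_{v,w}$, $f*g:S\vee S'\to X$ is the induced map. A necklace is $T=\square^{n_1}\vee\dots\vee\square^{n_k}$ ($n_i\ge1$) pointed by $\alpha$ of the first and $\omega$ of the last cube, with beads $B_i:\square^{n_i}\to T$. Its vertex set is ordered by $\preccurlyeq$: $x\preccurlyeq y$ iff they lie in a common bead with $x\subseteq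 y$ or $x$ lies in an earlier bead than $y$. $\mathcal{N}ec$ is the full subcategory of double-pointed cubical sets on necklaces. For a cubical set $S$ and vertices $a,b$, $\mathcal{N}ec/S_{a,b}$ has objects maps $f:U\to S$ with $U$ a necklace sending its endpoints to $a,b$, and morphisms the maps $g$ in $\mathcal{N}ec$ with $f'g=f$. Subnecklace: for vertices $a\preccurlyeq b$ of $T$: if $a,b$ lie in the bead $\square^{n_i}$, $T_{[a,b]}=\square^{d(a,b)}$ and $\iota^T_{a,b}=B_i\circ\iota^{n_i}_{a,b}$; if $a\in\square^{n_i}$, $b\in\square^{n_j}$ with $i<j$, $T_{[a,b]}=\square^{d(a,\omega)}\vee\square^{n_{i+1}}\vee\dots\vee\square^{n_{j-1}}\vee\square^{d(\alpha,b)}$ and $\iota^T_{a,b}=(B_i\circ\iota^{n_i}_{a,\omega})*B_{i+1}*\dots*B_{j-1}*(B_j\circ\iota^{n_j}_{\alpha,b})$. *)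

theory Defs
  imports Main
begin

section \<open>The box category (faces, degeneracies, negative connections)\<close>

text \<open>A vertex of [1]^n is a boolean list of length n (coordinate p is True iff p+1 is
  in the corresponding subset of {1..n}). A morphism [1]^m -> [1]^n is represented by its
  action on vertices, made extensional (undefined off lists of length m).\<close>

type_synonym bhom = "bool list \<Rightarrow> bool list"

definition hext :: "nat \<Rightarrow> bhom \<Rightarrow> bhom" where
  "hext m f = (\<lambda>x. if length x = m then f x else undefined)"

inductive box_hom :: "nat \<Rightarrow> nat \<Rightarrow> bhom \<Rightarrow> bool" where
  bh_id: "box_hom n n (hext n id)"
| bh_face: "i \<le> n \<Longrightarrow> box_hom n (Suc n) (hext n (\<lambda>x. take i x @ e # drop i x))"
| bh_degen: "i \<le> n \<Longrightarrow> box_hom (Suc n) n (hext (Suc n) (\<lambda>x. take i x @ drop (Suc i) x))"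
| bh_conn: "i < n \<Longrightarrow>
    box_hom (Suc n) n (hext (Suc n) (\<lambda>x. take i x @ (x ! i \<or> x ! Suc i) # drop (Suc (Suc i)) x))"
| bh_comp: "box_hom m n f \<Longrightarrow> box_hom k m g \<Longrightarrow> box_hom k n (hext k (f \<circ> g))"

text \<open>cells X n = set of n-cubes; act X m n f : X_n -> X_m for f : [1]^m -> [1]^n.\<close>
record 'c cset =
  cells :: "nat \<Rightarrow> 'c set"
  act :: "nat \<Rightarrow> nat \<Rightarrow> bhom \<Rightarrow> 'c \<Rightarrow> 'c"

definition cubical_set :: "'c cset \<Rightarrow> bool" where
  "cubical_set X \<longleftrightarrow>
     (\<forall>m n f x. box_hom m n f \<and> x \<in> cells X n \<longrightarrow> act X m n f x \<in> cells X m) \<and>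
     (\<forall>n x. x \<in> cells X n \<longrightarrow> act X n n (hext n id) x = x) \<and>
     (\<forall>k m n f g x. box_hom m n f \<and> box_hom k m g \<and> x \<in> cells X n \<longrightarrow>
        act X k n (hext k (f \<circ> g)) x = act X k m g (act X m n f x))"

definition cmap :: "'c cset \<Rightarrow> 'd cset \<Rightarrow> (nat \<Rightarrow> 'c \<Rightarrow> 'd) \<Rightarrow> bool" where
  "cmap X Y F \<longleftrightarrow>
     (\<forall>n x. x \<in> cells X n \<longrightarrow> F n x \<in> cells Y n) \<and>
     (\<forall>m n f x. box_hom m n f \<and> x \<in> cells X n \<longrightarrow> F m (act X m n f x) = act Y m n f (F n x))"

definition bot_v :: "nat \<Rightarrow> bool list" where "bot_v n = replicate n False"
definition top_v :: "nat \<Rightarrow> bool list" where "top_v n = replicate n True"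

definition constv :: "nat \<Rightarrow> bool list \<Rightarrow> bhom" where
  "constv m v = hext m (\<lambda>_. v)"

type_synonym ncell = "(nat \<times> bhom) set"

text \<open>Pointwise pushout: the m-cubes of the i-th bead are the box maps [1]^m -> [1]^(ds!i);
  the degenerate cube at omega of bead i is identified with the one at alpha of bead i+1.\<close>

definition bead_cells :: "nat list \<Rightarrow> nat \<Rightarrow> (nat \<times> bhom) set" where
  "bead_cells ds m = {(i, f). i < length ds \<and> box_hom m (ds ! i) f}"

definition glue :: "nat list \<Rightarrow> nat \<Rightarrow> ((nat \<times> bhom) \<times> (nat \<times> bhom)) set" where
  "glue ds m = {((i, constv m (top_v (ds ! i))), (Suc i, constv m (bot_v (ds ! Suc i)))) | i.
                  Suc i < length ds}"

definition wrel :: "nat list \<Rightarrow> nat \<Rightarrow> ((nat \<times> bhom) \<times> (nat \<times> bhom)) set" where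
  "wrel ds m = (glue ds m \<union> (glue ds m)\<inverse>)\<^sup>*"

definition bcell :: "nat list \<Rightarrow> nat \<Rightarrow> nat \<Rightarrow> bhom \<Rightarrow> ncell" where
  "bcell ds m i f = wrel ds m `` {(i, f)}"

definition wedge :: "nat list \<Rightarrow> ncell cset" where
  "wedge ds = \<lparr> cells = (\<lambda>m. (\<lambda>(i, f). bcell ds m i f) ` bead_cells ds m),
                act = (\<lambda>m k g X. the_elem ((\<lambda>(i, f). bcell ds m i (hext m (f \<circ> g))) ` X)) \<rparr>"

definition walpha :: "nat list \<Rightarrow> ncell" where
  "walpha ds = bcell ds 0 0 (constv 0 (bot_v (ds ! 0)))"

definition womega :: "nat list \<Rightarrow> ncell" where
  "womega ds = bcell ds 0 (length ds - 1) (constv 0 (top_v (last ds)))"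

text \<open>Necklace: a wedge of cubes of positive dimension, or the point [1]^0 (empty wedge).\<close>
definition necklace :: "nat list \<Rightarrow> bool" where
  "necklace ds \<longleftrightarrow> ds \<noteq> [] \<and> (ds = [0] \<or> (\<forall>d \<in> set ds. 0 < d))"

text \<open>The map out of a wedge induced (Yoneda + pushout) by a list of cubes xs!i in
  the (ds!i)-cubes of C: this is the map x_1 * ... * x_k.\<close>
definition wmap :: "'c cset \<Rightarrow> nat list \<Rightarrow> 'c list \<Rightarrow> nat \<Rightarrow> ncell \<Rightarrow> 'c" where
  "wmap C ds xs = (\<lambda>m X. the_elem ((\<lambda>(i, f). act C m (ds ! i) f (xs ! i)) ` X))"

definition in_bead :: "nat list \<Rightarrow> nat \<Rightarrow> ncell \<Rightarrow> bool list \<Rightarrow> bool" where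
  "in_bead ns i x v \<longleftrightarrow> i < length ns \<and> length v = ns ! i \<and> x = bcell ns 0 i (constv 0 v)"

definition vle :: "bool list \<Rightarrow> bool list \<Rightarrow> bool" where
  "vle u v \<longleftrightarrow> list_all2 (\<lambda>p q. p \<longrightarrow> q) u v"

definition prec :: "nat list \<Rightarrow> ncell \<Rightarrow> ncell \<Rightarrow> bool" where
  "prec ns x y \<longleftrightarrow>
     (\<exists>i u v. in_bead ns i x u \<and> in_bead ns i y v \<and> vle u v) \<or>
     (\<exists>i j u v. i < j \<and> in_bead ns i x u \<and> in_bead ns j y v)"

definition vdist :: "bool list \<Rightarrow> bool list \<Rightarrow> nat" where
  "vdist u v = card {p. p < length u \<and> v ! p \<and> \<not> u ! p}"

fun fill :: "bool list \<Rightarrow> bool list \<Rightarrow> bool list \<Rightarrow> bool list" where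
  "fill (p # ps) (q # qs) x =
     (if p then True # fill ps qs x
      else if \<not> q then False # fill ps qs x
      else hd x # fill ps qs (tl x))"
| "fill _ _ _ = []"

definition iota :: "bool list \<Rightarrow> bool list \<Rightarrow> bhom" where
  "iota u v = hext (vdist u v) (fill u v)"

text \<open>Beads of T_[a,b] together with the cube of T they are sent to by iota^T_{a,b}.
  In the case of distinct beads, a is taken in the last bead containing it and b in the
  first bead containing it (so that no 0-dimensional beads occur).\<close>
definition sub_data :: "nat list \<Rightarrow> ncell \<Rightarrow> ncell \<Rightarrow> (nat \<times> ncell) list" where
  "sub_data ns a b =
    (if \<exists>i u v. in_bead ns i a u \<and> in_bead ns i b v \<and> vle u v then
       (case (SOME (i, u, v). in_bead ns i a u \<and> in_bead ns i b v \<and> vle u v) of (i, u, v) \<Rightarrow>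
          [(vdist u v, bcell ns (vdist u v) i (iota u v))])
     else
       (let i = (GREATEST i. \<exists>u. in_bead ns i a u);
            u = (THE u. in_bead ns i a u);
            j = (LEAST j. \<exists>v. in_bead ns j b v);
            v = (THE v. in_bead ns j b v)
        in (vdist u (top_v (ns ! i)), bcell ns (vdist u (top_v (ns ! i))) i (iota u (top_v (ns ! i))))
           # map (\<lambda>l. (ns ! l, bcell ns (ns ! l) l (hext (ns ! l) id))) [Suc i..<j]
           @ [(vdist (bot_v (ns ! j)) v, bcell ns (vdist (bot_v (ns ! j)) v) j (iota (bot_v (ns ! j)) v))]))"

definition sub_dims :: "nat list \<Rightarrow> ncell \<Rightarrow> ncell \<Rightarrow> nat list" where
  "sub_dims ns a b = map fst (sub_data ns a b)"

definition sub_iota :: "nat list \<Rightarrow> ncell \<Rightarrow> ncell \<Rightarrow> nat \<Rightarrow> ncell \<Rightarrow> ncell" where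
  "sub_iota ns a b = wmap (wedge ns) (sub_dims ns a b) (map snd (sub_data ns a b))"

definition nec_obj :: "'c cset \<Rightarrow> 'c \<Rightarrow> 'c \<Rightarrow> nat list \<Rightarrow> (nat \<Rightarrow> ncell \<Rightarrow> 'c) \<Rightarrow> bool" where
  "nec_obj S a b ds f \<longleftrightarrow> necklace ds \<and> cmap (wedge ds) S f \<and>
     f 0 (walpha ds) = a \<and> f 0 (womega ds) = b"

definition nec_hom :: "nat list \<Rightarrow> nat list \<Rightarrow> (nat \<Rightarrow> ncell \<Rightarrow> ncell) \<Rightarrow> bool" where
  "nec_hom ds es g \<longleftrightarrow> cmap (wedge ds) (wedge es) g \<and>
     g 0 (walpha ds) = walpha es \<and> g 0 (womega ds) = womega es"

definition over :: "nat list \<Rightarrow> (nat \<Rightarrow> ncell \<Rightarrow> 'c) \<Rightarrow> (nat \<Rightarrow> ncell \<Rightarrow> ncell) \<Rightarrow> (nat \<Rightarrow> ncell \<Rightarrow> 'c) \<Rightarrow> bool" where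
  "over ds t g f \<longleftrightarrow> (\<forall>m x. x \<in> cells (wedge ds) m \<longrightarrow> t m (g m x) = f m x)"

definition nec_terminal :: "'c cset \<Rightarrow> 'c \<Rightarrow> 'c \<Rightarrow> nat list \<Rightarrow> (nat \<Rightarrow> ncell \<Rightarrow> 'c) \<Rightarrow> bool" where
  "nec_terminal S a b es t \<longleftrightarrow> nec_obj S a b es t \<and>
     (\<forall>ds f. nec_obj S a b ds f \<longrightarrow>
        (\<exists>g. nec_hom ds es g \<and> over ds t g f) \<and>
        (\<forall>g g'. nec_hom ds es g \<and> over ds t g f \<and> nec_hom ds es g' \<and> over ds t g' f \<longrightarrow>
           (\<forall>m x. x \<in> cells (wedge ds) m \<longrightarrow> g m x = g' m x)))"

end

(*
  The inclusion iota of the subnecklace T_[a,b] is injective on cells, and its image contains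
  every cube of T whose lowest and highest vertices lie in the interval from a to b.  Every
  necklace f over T_(a,b) maps each bead monotonically into a single bead of T, and chaining
  along the beads from a to b shows that all these images lie in that interval.  Hence every
  bead of the source lifts along iota; the lifts glue, and are unique, because iota is injective.
*)
theory Submission
  imports Defs
begin

section \<open>Box maps\<close>

lemma box_hom_length: "box_hom m n f \<Longrightarrow> length x = m \<Longrightarrow> length (f x) = n"
  by (induction arbitrary: x rule: box_hom.induct) (auto simp: hext_def min_def)

lemma box_hom_undefined: "box_hom m n f \<Longrightarrow> length x \<noteq> m \<Longrightarrow> f x = undefined"
  by (induction arbitrary: x rule: box_hom.induct) (auto simp: hext_def)

lemma hext_cong: "(\<And>x. length x = m \<Longrightarrow> f x = g x) \<Longrightarrow> hext m f = hext m g"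
  by (auto simp: hext_def)

lemma hext_apply: "length x = m \<Longrightarrow> hext m f x = f x"
  by (simp add: hext_def)

lemma box_hom_hext: "box_hom m n f \<Longrightarrow> hext m f = f"
  by (auto simp: hext_def box_hom_undefined)

lemma box_hom_eqI:
  "box_hom m n f \<Longrightarrow> box_hom m n g \<Longrightarrow> (\<And>x. length x = m \<Longrightarrow> f x = g x) \<Longrightarrow> f = g"
  by (metis box_hom_hext hext_cong)

lemma hext_id_comp: "box_hom m n f \<Longrightarrow> hext m (hext n id \<circ> f) = f"
  using hext_cong[of m "hext n id \<circ> f" f] by (simp add: hext_apply box_hom_length box_hom_hext)

lemma hext_comp_id: "box_hom m n f \<Longrightarrow> hext m (f \<circ> hext m id) = f"
  using hext_cong[of m "f \<circ> hext m id" f] by (simp add: hext_apply box_hom_hext)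

lemma hext_constv_comp: "box_hom m k g \<Longrightarrow> hext m (constv k v \<circ> g) = constv m v"
  unfolding constv_def by (rule hext_cong) (simp add: hext_apply box_hom_length)

lemma hext_comp_constv: "hext 0 (\<sigma> \<circ> constv 0 w) = constv 0 (\<sigma> w)"
  unfolding constv_def by (rule hext_cong) (simp add: hext_apply)

lemma constv_eq_iff: "constv m v = constv m w \<longleftrightarrow> v = w"
  unfolding constv_def hext_def by (metis (mono_tags) length_replicate)

lemma length_top_v [simp]: "length (top_v n) = n"
  and length_bot_v [simp]: "length (bot_v n) = n"
  by (auto simp: top_v_def bot_v_def)

lemma top_ne_bot: "0 < n \<Longrightarrow> top_v n \<noteq> bot_v n"
  by (cases n) (auto simp: top_v_def bot_v_def)

lemma vle_iff_nth: "vle u v \<longleftrightarrow> length u = length v \<and> (\<forall>p<length u. u ! p \<longrightarrow> v ! p)"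
  by (simp add: vle_def list_all2_conv_all_nth)

lemma vle_trans: "vle u v \<Longrightarrow> vle v w \<Longrightarrow> vle u w"
  by (simp add: vle_iff_nth)

lemma vle_antisym: "vle u v \<Longrightarrow> vle v u \<Longrightarrow> u = v"
  by (auto simp: vle_iff_nth intro: nth_equalityI)

lemma vle_length: "vle u v \<Longrightarrow> length u = length v"
  by (simp add: vle_iff_nth)

lemma vle_top_v_iff: "vle u (top_v n) \<longleftrightarrow> length u = n"
  by (auto simp: vle_iff_nth top_v_def)

lemma bot_v_vle_iff: "vle (bot_v n) u \<longleftrightarrow> length u = n"
  by (auto simp: vle_iff_nth bot_v_def)

lemma top_v_vle_iff: "vle (top_v n) u \<longleftrightarrow> u = top_v n"
  by (auto simp: vle_iff_nth top_v_def intro: nth_equalityI)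

lemma vle_bot_v_iff: "vle u (bot_v n) \<longleftrightarrow> u = bot_v n"
  by (auto simp: vle_iff_nth bot_v_def intro: nth_equalityI)

lemma box_hom_mono: "box_hom m n f \<Longrightarrow> vle x y \<Longrightarrow> length x = m \<Longrightarrow> vle (f x) (f y)"
proof (induction arbitrary: x y rule: box_hom.induct)
  case (bh_id n)
  then show ?case by (simp add: hext_def vle_length)
next
  case (bh_face i n e)
  then show ?case
    by (auto simp: hext_def vle_length vle_def intro!: list_all2_appendI list_all2_takeI list_all2_dropI)
next
  case (bh_degen i n)
  then show ?case
    by (auto simp: hext_def vle_length vle_def intro!: list_all2_appendI list_all2_takeI list_all2_dropI)
next
  case (bh_conn i n)
  then have "length y = Suc n" by (simp add: vle_length)
  with bh_conn show ?case
    unfolding hext_def vle_def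
    by (simp, intro list_all2_appendI list_all2_takeI list_all2_Cons[THEN iffD2] conjI list_all2_dropI)
       (auto simp: list_all2_conv_all_nth)
next
  case (bh_comp m n f k g)
  then show ?case by (simp add: hext_def vle_length box_hom_length)
qed

lemma card_less_Suc_split:
  "card {p. p < Suc n \<and> P p} = (if P 0 then 1 else 0) + card {p. p < n \<and> P (Suc p)}"
proof -
  have "{p. p < Suc n \<and> P p} = {p. p = 0 \<and> P 0} \<union> Suc ` {p. p < n \<and> P (Suc p)}"
    by (auto simp: less_Suc_eq_0_disj)
  moreover have "card {p. p = 0 \<and> P 0} = (if P 0 then 1 else 0)" by auto
  moreover have "{p. p = 0 \<and> P 0} \<inter> Suc ` {p. p < n \<and> P (Suc p)} = {}" by auto
  ultimately show ?thesis
    by (simp add: card_Un_disjoint card_image)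
qed

lemma vdist_Nil [simp]: "vdist [] v = 0"
  by (simp add: vdist_def)

lemma vdist_Cons [simp]:
  "vdist (x # u) (y # v) = (if y \<and> \<not> x then Suc (vdist u v) else vdist u v)"
  unfolding vdist_def by (simp add: card_less_Suc_split)

lemma vdist_pos: "vle u v \<Longrightarrow> u \<noteq> v \<Longrightarrow> 0 < vdist u v"
  by (induction u v rule: list_induct2') (auto simp: vle_def)

lemma vdist_bot_top: "vdist (bot_v n) (top_v n) = n"
  by (induction n) (auto simp: bot_v_def top_v_def)

text \<open>\<open>proj u v\<close> reads off the coordinates that \<open>fill u v\<close> leaves free, so it inverts \<open>iota u v\<close>
  on the vertices between \<open>u\<close> and \<open>v\<close>.\<close>

fun proj :: "bool list \<Rightarrow> bool list \<Rightarrow> bool list \<Rightarrow> bool list" where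
  "proj (p # ps) (q # qs) (y # ys) = (if \<not> p \<and> q then y # proj ps qs ys else proj ps qs ys)"
| "proj _ _ _ = []"

lemma fill_proj: "vle u y \<Longrightarrow> vle y v \<Longrightarrow> fill u v (proj u v y) = y"
  by (induction u v y rule: proj.induct) (auto simp: vle_def)

lemma proj_fill: "vle u v \<Longrightarrow> length x = vdist u v \<Longrightarrow> proj u v (fill u v x) = x"
proof (induction u arbitrary: v x)
  case (Cons p ps)
  then obtain q qs where "v = q # qs" by (cases v) (auto simp: vle_def)
  with Cons.prems Cons.IH[of qs x] Cons.IH[of qs "tl x"] show ?case
    by (cases x) (auto simp: vle_def split: if_splits)
qed (auto simp: vle_def)

lemma fill_bot: "vle u v \<Longrightarrow> fill u v (bot_v (vdist u v)) = u"
  by (induction u v rule: list_induct2') (auto simp: vle_def bot_v_def)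

lemma fill_top: "vle u v \<Longrightarrow> fill u v (top_v (vdist u v)) = v"
  by (induction u v rule: list_induct2') (auto simp: vle_def top_v_def)

lemma proj_top: "length u = length v \<Longrightarrow> proj u v (top_v (length u)) = top_v (vdist u v)"
  by (induction u v "top_v (length u)" rule: proj.induct) (auto simp: top_v_def)

lemma proj_bot: "length u = length v \<Longrightarrow> proj u v (bot_v (length u)) = bot_v (vdist u v)"
  by (induction u v "bot_v (length u)" rule: proj.induct) (auto simp: bot_v_def)

lemma iota_apply: "length x = vdist u v \<Longrightarrow> iota u v x = fill u v x"
  by (simp add: iota_def hext_apply)

lemma iota_bot_top: "iota (bot_v n) (top_v n) = hext n id"
proof -
  have "fill (bot_v n) (top_v n) x = x" if "length x = n" for x
    using that by (induction x arbitrary: n) (auto simp: bot_v_def top_v_def)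
  then show ?thesis
    unfolding iota_def vdist_bot_top by (intro hext_cong) simp
qed

lemma iota_inj:
  "vle u v \<Longrightarrow> length x = vdist u v \<Longrightarrow> length y = vdist u v \<Longrightarrow> iota u v x = iota u v y \<Longrightarrow> x = y"
  by (metis iota_apply proj_fill)

lemma box_hom_Cons: "box_hom m n f \<Longrightarrow> box_hom m (Suc n) (hext m (\<lambda>x. e # f x))"
proof -
  assume f: "box_hom m n f"
  have "box_hom n (Suc n) (hext n (\<lambda>x. take 0 x @ e # drop 0 x))" by (rule bh_face) simp
  from bh_comp[OF this f] have "box_hom m (Suc n) (hext m (hext n (\<lambda>x. take 0 x @ e # drop 0 x) \<circ> f))" .
  moreover have "hext m (hext n (\<lambda>x. take 0 x @ e # drop 0 x) \<circ> f) = hext m (\<lambda>x. e # f x)"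
    by (rule hext_cong) (simp add: hext_def box_hom_length[OF f])
  ultimately show ?thesis by simp
qed

lemma box_hom_tl: "box_hom m n f \<Longrightarrow> box_hom (Suc m) n (hext (Suc m) (\<lambda>x. f (tl x)))"
proof -
  assume f: "box_hom m n f"
  have "box_hom (Suc m) m (hext (Suc m) (\<lambda>x. take 0 x @ drop (Suc 0) x))" by (rule bh_degen) simp
  from bh_comp[OF f this] have "box_hom (Suc m) n (hext (Suc m) (f \<circ> hext (Suc m) (\<lambda>x. take 0 x @ drop (Suc 0) x)))" .
  moreover have "hext (Suc m) (f \<circ> hext (Suc m) (\<lambda>x. take 0 x @ drop (Suc 0) x)) = hext (Suc m) (\<lambda>x. f (tl x))"
    by (rule hext_cong) (simp add: hext_def drop_Suc)
  ultimately show ?thesis by simp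
qed

lemma box_hom_hd_Cons: "box_hom m n f \<Longrightarrow> box_hom (Suc m) (Suc n) (hext (Suc m) (\<lambda>x. hd x # f (tl x)))"
proof (induction rule: box_hom.induct)
  case (bh_id n)
  have "hext (Suc n) (\<lambda>x. hd x # hext n id (tl x)) = hext (Suc n) id"
    by (rule hext_cong) (case_tac x; simp add: hext_def)
  then show ?case using box_hom.bh_id by simp
next
  case (bh_face i n e)
  have "hext (Suc n) (\<lambda>x. hd x # hext n (\<lambda>x. take i x @ e # drop i x) (tl x)) =
        hext (Suc n) (\<lambda>x. take (Suc i) x @ e # drop (Suc i) x)"
    by (rule hext_cong) (case_tac x; simp add: hext_def)
  then show ?case using box_hom.bh_face[of "Suc i" "Suc n" e] bh_face by simp
next
  case (bh_degen i n)
  have "hext (Suc (Suc n)) (\<lambda>x. hd x # hext (Suc n) (\<lambda>x. take i x @ drop (Suc i) x) (tl x)) =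
        hext (Suc (Suc n)) (\<lambda>x. take (Suc i) x @ drop (Suc (Suc i)) x)"
    by (rule hext_cong) (case_tac x; simp add: hext_def)
  then show ?case using box_hom.bh_degen[of "Suc i" "Suc n"] bh_degen by simp
next
  case (bh_conn i n)
  have "hext (Suc (Suc n))
          (\<lambda>x. hd x # hext (Suc n) (\<lambda>x. take i x @ (x ! i \<or> x ! Suc i) # drop (Suc (Suc i)) x) (tl x)) =
        hext (Suc (Suc n))
          (\<lambda>x. take (Suc i) x @ (x ! Suc i \<or> x ! Suc (Suc i)) # drop (Suc (Suc (Suc i))) x)"
    by (rule hext_cong) (case_tac x; simp add: hext_def)
  then show ?case using box_hom.bh_conn[of "Suc i" "Suc n"] bh_conn by simp
next
  case (bh_comp m n f k g)
  from box_hom.bh_comp[OF bh_comp.IH]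
  have "box_hom (Suc k) (Suc n)
          (hext (Suc k) (hext (Suc m) (\<lambda>x. hd x # f (tl x)) \<circ> hext (Suc k) (\<lambda>x. hd x # g (tl x))))" .
  moreover have "hext (Suc k) (hext (Suc m) (\<lambda>x. hd x # f (tl x)) \<circ> hext (Suc k) (\<lambda>x. hd x # g (tl x)))
     = hext (Suc k) (\<lambda>x. hd x # hext k (f \<circ> g) (tl x))"
    by (rule hext_cong) (auto simp: hext_def neq_Nil_conv box_hom_length[OF bh_comp.hyps(2)])
  ultimately show ?case by simp
qed

lemma box_hom_constv_Nil: "box_hom m 0 (constv m [])"
proof (induction m)
  case 0
  have "constv 0 [] = hext 0 id" unfolding constv_def by (rule hext_cong) simp
  then show ?case using bh_id[of 0] by simp
next
  case (Suc m)
  have "hext (Suc m) (\<lambda>x. constv m [] (tl x)) = constv (Suc m) []"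
    unfolding constv_def by (rule hext_cong) (simp add: hext_apply)
  with box_hom_tl[OF Suc] show ?case by simp
qed

lemma box_hom_constv_point: "box_hom 0 (length v) (constv 0 v)"
proof (induction v)
  case Nil
  then show ?case using box_hom_constv_Nil[of 0] by simp
next
  case (Cons e v)
  have "hext 0 (\<lambda>x. e # constv 0 v x) = constv 0 (e # v)"
    unfolding constv_def by (rule hext_cong) (simp add: hext_apply)
  with box_hom_Cons[OF Cons, of e] show ?case by simp
qed

lemma box_hom_constv: "length v = n \<Longrightarrow> box_hom m n (constv m v)"
proof -
  assume "length v = n"
  moreover have "hext m (constv 0 v \<circ> constv m []) = constv m v"
    unfolding constv_def by (rule hext_cong) (simp add: hext_def)
  ultimately show ?thesis
    using bh_comp[OF box_hom_constv_point[of v] box_hom_constv_Nil[of m]] by simp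
qed

lemma box_hom_iota: "vle u v \<Longrightarrow> box_hom (vdist u v) (length u) (iota u v)"
proof (induction u arbitrary: v)
  case Nil
  then have "v = []" by (simp add: vle_def)
  moreover have "iota [] [] = hext 0 id" unfolding iota_def by (auto intro!: hext_cong)
  ultimately show ?case using bh_id[of 0] by simp
next
  case (Cons p ps)
  then obtain q qs where v: "v = q # qs" and pq: "p \<longrightarrow> q" and l: "vle ps qs"
    by (cases v) (auto simp: vle_def)
  note IH = Cons.IH[OF l]
  show ?case
  proof (cases "\<not> p \<and> q")
    case True
    have "hext (Suc (vdist ps qs)) (\<lambda>x. hd x # iota ps qs (tl x)) =
          hext (Suc (vdist ps qs)) (fill (p # ps) (q # qs))"
    proof (rule hext_cong)
      fix x :: "bool list" assume "length x = Suc (vdist ps qs)"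
      then show "hd x # iota ps qs (tl x) = fill (p # ps) (q # qs) x"
        using True by (simp add: iota_apply)
    qed
    moreover have "vdist (p # ps) (q # qs) = Suc (vdist ps qs)" using True by auto
    ultimately show ?thesis using box_hom_hd_Cons[OF IH] v unfolding iota_def by simp
  next
    case False
    have "hext (vdist ps qs) (\<lambda>x. p # iota ps qs x) = hext (vdist ps qs) (fill (p # ps) (q # qs))"
    proof (rule hext_cong)
      fix x :: "bool list" assume "length x = vdist ps qs"
      then show "p # iota ps qs x = fill (p # ps) (q # qs) x"
        using False pq by (cases p; cases q) (simp_all add: iota_apply)
    qed
    moreover have "vdist (p # ps) (q # qs) = vdist ps qs" using False by auto
    ultimately show ?thesis using box_hom_Cons[OF IH, of p] v unfolding iota_def by simp
  qed
qed

lemma box_hom_proj: "length u = length v \<Longrightarrow> box_hom (length u) (vdist u v) (hext (length u) (proj u v))"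
proof (induction u arbitrary: v)
  case Nil
  then have "v = []" by simp
  have "hext 0 (\<lambda>_. []) = hext 0 id" by (rule hext_cong) simp
  then show ?case using bh_id[of 0] \<open>v = []\<close> by simp
next
  case (Cons p ps)
  then obtain q qs where v: "v = q # qs" and l: "length ps = length qs"
    by (cases v) auto
  note IH = Cons.IH[OF l]
  show ?case
  proof (cases "\<not> p \<and> q")
    case True
    from box_hom_hd_Cons[OF IH] have "box_hom (Suc (length ps)) (Suc (vdist ps qs))
        (hext (Suc (length ps)) (\<lambda>x. hd x # hext (length ps) (proj ps qs) (tl x)))" .
    moreover have "hext (Suc (length ps)) (\<lambda>x. hd x # hext (length ps) (proj ps qs) (tl x)) = hext (Suc (length ps)) (proj (p # ps) (q # qs))"
    proof (rule hext_cong)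
      fix x :: "bool list" assume "length x = Suc (length ps)"
      then show "hd x # hext (length ps) (proj ps qs) (tl x) = proj (p # ps) (q # qs) x"
        using True by (cases x) (simp_all add: hext_apply)
    qed
    moreover have "vdist (p # ps) (q # qs) = Suc (vdist ps qs)" using True by auto
    ultimately show ?thesis using v by simp
  next
    case False
    from box_hom_tl[OF IH] have "box_hom (Suc (length ps)) (vdist ps qs)
        (hext (Suc (length ps)) (\<lambda>x. hext (length ps) (proj ps qs) (tl x)))" .
    moreover have "hext (Suc (length ps)) (\<lambda>x. hext (length ps) (proj ps qs) (tl x)) = hext (Suc (length ps)) (proj (p # ps) (q # qs))"
    proof (rule hext_cong)
      fix x :: "bool list" assume "length x = Suc (length ps)"
      then show "hext (length ps) (proj ps qs) (tl x) = proj (p # ps) (q # qs) x"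
        using False by (cases x) (simp_all add: hext_apply)
    qed
    moreover have "vdist (p # ps) (q # qs) = vdist ps qs" using False by auto
    ultimately show ?thesis using v by simp
  qed
qed

lemma box_hom_factor_iota:
  assumes \<sigma>: "box_hom m n \<sigma>" and uv: "length u = n" "length v = n"
    and between: "\<And>x. length x = m \<Longrightarrow> vle u (\<sigma> x) \<and> vle (\<sigma> x) v"
  obtains \<tau> where "box_hom m (vdist u v) \<tau>" and "\<sigma> = hext m (iota u v \<circ> \<tau>)"
proof -
  define \<tau> where "\<tau> = hext m (hext n (proj u v) \<circ> \<sigma>)"
  have \<tau>: "box_hom m (vdist u v) \<tau>"
    unfolding \<tau>_def using box_hom_proj[of u v] uv bh_comp[OF _ \<sigma>] by simp
  have "\<sigma> x = (iota u v \<circ> \<tau>) x" if x: "length x = m" for x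
  proof -
    have "\<tau> x = proj u v (\<sigma> x)"
      unfolding \<tau>_def using x box_hom_length[OF \<sigma> x] by (simp add: hext_apply)
    then show ?thesis
      using box_hom_length[OF \<tau> x] fill_proj between[OF x] by (simp add: iota_apply)
  qed
  then have "hext m \<sigma> = hext m (iota u v \<circ> \<tau>)" by (rule hext_cong)
  then show thesis using that[OF \<tau>] by (simp add: box_hom_hext[OF \<sigma>])
qed

lemma iota_comp_eq_constv:
  assumes uv: "vle u v" and h: "box_hom m (vdist u v) h" and e: "hext m (iota u v \<circ> h) = constv m w"
  shows "h = constv m (proj u v w)"
proof -
  have "h x = proj u v w" if x: "length x = m" for x
  proof -
    have l: "length (h x) = vdist u v" using box_hom_length[OF h x] .
    have "iota u v (h x) = w" using fun_cong[OF e, of x] x by (simp add: hext_apply constv_def)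
    then show ?thesis using proj_fill[OF uv l] l by (simp add: iota_apply)
  qed
  then have "hext m h = constv m (proj u v w)" unfolding constv_def by (rule hext_cong)
  then show ?thesis by (simp add: box_hom_hext[OF h])
qed

section \<open>Wedges of cubes\<close>

definition gluable :: "nat list \<Rightarrow> bool" where
  "gluable ds \<longleftrightarrow> (\<forall>i. Suc i < length ds \<longrightarrow> 0 < ds ! i \<and> 0 < ds ! Suc i)"

lemma necklace_gluable: "necklace ds \<Longrightarrow> gluable ds"
  unfolding necklace_def gluable_def by (auto simp: nth_mem)

lemma mem_glue: "(x, y) \<in> glue ds m \<longleftrightarrow>
    (\<exists>i. Suc i < length ds \<and> x = (i, constv m (top_v (ds ! i))) \<and> y = (Suc i, constv m (bot_v (ds ! Suc i))))"
  unfolding glue_def by auto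

text \<open>Gluing never chains, because the two ends of a bead of positive dimension differ.\<close>

lemma wrel_iff:
  assumes "gluable ds"
  shows "(x, y) \<in> wrel ds m \<longleftrightarrow> x = y \<or> (x, y) \<in> glue ds m \<or> (y, x) \<in> glue ds m"
proof
  assume "(x, y) \<in> wrel ds m"
  then have "(x, y) \<in> (glue ds m \<union> (glue ds m)\<inverse>)\<^sup>*" by (simp add: wrel_def)
  then show "x = y \<or> (x, y) \<in> glue ds m \<or> (y, x) \<in> glue ds m"
  proof (induction rule: rtrancl_induct)
    case (step y z)
    from step.hyps(2) have "(y, z) \<in> glue ds m \<or> (z, y) \<in> glue ds m" by auto
    with step.IH show ?case
      using assms unfolding gluable_def mem_glue
      by (auto simp: constv_eq_iff top_ne_bot top_ne_bot[symmetric])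
  qed simp
qed (auto simp: wrel_def)

lemma wrel_equiv: "equiv UNIV (wrel ds m)"
proof (rule equivI)
  show "refl_on UNIV (wrel ds m)" unfolding wrel_def by (simp add: refl_on_def)
  show "sym (wrel ds m)" unfolding wrel_def by (intro sym_rtrancl sym_Un_converse)
  show "trans (wrel ds m)" unfolding wrel_def by (rule trans_rtrancl)
qed simp

lemma bcell_eq_iff:
  assumes "gluable ds"
  shows "bcell ds m i f = bcell ds m i' f' \<longleftrightarrow>
     (i, f) = (i', f') \<or> ((i, f), (i', f')) \<in> glue ds m \<or> ((i', f'), (i, f)) \<in> glue ds m"
  unfolding bcell_def
  using eq_equiv_class_iff[OF wrel_equiv, of "(i, f)" "(i', f')"] wrel_iff[OF assms] by simp

lemma the_elem_image_bcell:
  assumes "gluable ds" and "\<And>x y. (x, y) \<in> glue ds m \<Longrightarrow> F x = F y"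
  shows "the_elem (F ` bcell ds m i f) = F (i, f)"
proof -
  have "F ` bcell ds m i f = {F (i, f)}"
    using assms unfolding bcell_def by (force simp: wrel_iff)
  then show ?thesis by simp
qed

lemma act_wedge:
  assumes "gluable ds" "box_hom m k g"
  shows "act (wedge ds) m k g (bcell ds k i f) = bcell ds m i (hext m (f \<circ> g))"
proof -
  let ?F = "\<lambda>(i, f). bcell ds m i (hext m (f \<circ> g))"
  have "?F x = ?F y" if "(x, y) \<in> glue ds k" for x y
  proof -
    from that obtain l where l: "Suc l < length ds"
      and "x = (l, constv k (top_v (ds ! l)))" "y = (Suc l, constv k (bot_v (ds ! Suc l)))"
      by (auto simp: mem_glue)
    moreover have "bcell ds m l (constv m (top_v (ds ! l))) = bcell ds m (Suc l) (constv m (bot_v (ds ! Suc l)))"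
      using l by (simp add: bcell_eq_iff[OF assms(1)] mem_glue)
    ultimately show ?thesis by (simp add: hext_constv_comp[OF assms(2)])
  qed
  then have "the_elem (?F ` bcell ds k i f) = ?F (i, f)"
    by (rule the_elem_image_bcell[OF assms(1)])
  then show ?thesis by (simp add: wedge_def)
qed

lemma cells_wedge:
  "X \<in> cells (wedge ds) m \<longleftrightarrow> (\<exists>i f. i < length ds \<and> box_hom m (ds ! i) f \<and> X = bcell ds m i f)"
  by (auto simp: wedge_def bead_cells_def)

lemma bcell_in_cells: "i < length ds \<Longrightarrow> box_hom m (ds ! i) f \<Longrightarrow> bcell ds m i f \<in> cells (wedge ds) m"
  by (auto simp: cells_wedge)

lemma cubical_wedge:
  assumes "gluable ds"
  shows "cubical_set (wedge ds)"
  unfolding cubical_set_def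
proof (intro conjI allI impI)
  fix m n f x assume a: "box_hom m n f \<and> x \<in> cells (wedge ds) n"
  then obtain i h where "i < length ds" "box_hom n (ds ! i) h" "x = bcell ds n i h"
    by (auto simp: cells_wedge)
  with a show "act (wedge ds) m n f x \<in> cells (wedge ds) m"
    by (simp add: act_wedge[OF assms] bcell_in_cells bh_comp)
next
  fix n x assume "x \<in> cells (wedge ds) n"
  then show "act (wedge ds) n n (hext n id) x = x"
    by (auto simp: cells_wedge act_wedge[OF assms bh_id] hext_comp_id)
next
  fix k m n f g x assume a: "box_hom m n f \<and> box_hom k m g \<and> x \<in> cells (wedge ds) n"
  then obtain i h where "box_hom n (ds ! i) h" "x = bcell ds n i h"
    by (auto simp: cells_wedge)
  moreover have "hext k (h \<circ> hext k (f \<circ> g)) = hext k (hext m (h \<circ> f) \<circ> g)"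
    by (rule hext_cong) (use a in \<open>simp add: hext_apply box_hom_length[of k m g]\<close>)
  ultimately show "act (wedge ds) k n (hext k (f \<circ> g)) x = act (wedge ds) k m g (act (wedge ds) m n f x)"
    using a by (simp add: act_wedge[OF assms] act_wedge[OF assms bh_comp[of m n f k g]])
qed

lemma cubical_act_cells:
  "cubical_set C \<Longrightarrow> box_hom m n f \<Longrightarrow> x \<in> cells C n \<Longrightarrow> act C m n f x \<in> cells C m"
  unfolding cubical_set_def by blast

lemma cubical_act_comp:
  "cubical_set C \<Longrightarrow> box_hom m n f \<Longrightarrow> box_hom k m g \<Longrightarrow> x \<in> cells C n \<Longrightarrow>
   act C k n (hext k (f \<circ> g)) x = act C k m g (act C m n f x)"
  unfolding cubical_set_def by blast

lemma cubical_act_id: "cubical_set C \<Longrightarrow> x \<in> cells C n \<Longrightarrow> act C n n (hext n id) x = x"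
  unfolding cubical_set_def by blast

lemma cubical_act_constv:
  assumes "cubical_set C" "x \<in> cells C k" "length v = k"
  shows "act C m k (constv m v) x = act C m 0 (constv m []) (act C 0 k (constv 0 v) x)"
proof -
  have "hext m (constv 0 v \<circ> constv m []) = constv m v"
    unfolding constv_def by (rule hext_cong) (simp add: hext_apply)
  with cubical_act_comp[OF assms(1) box_hom_constv[OF assms(3)] box_hom_constv_Nil[of m] assms(2)]
  show ?thesis by simp
qed

lemma cmap_act:
  "cmap X Y F \<Longrightarrow> box_hom m n h \<Longrightarrow> x \<in> cells X n \<Longrightarrow> F m (act X m n h x) = act Y m n h (F n x)"
  unfolding cmap_def by blast

lemma cmap_cells: "cmap X Y F \<Longrightarrow> x \<in> cells X n \<Longrightarrow> F n x \<in> cells Y n"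
  unfolding cmap_def by blast

lemma cmap_comp: "cmap X Y F \<Longrightarrow> cmap Y Z G \<Longrightarrow> cmap X Z (\<lambda>n x. G n (F n x))"
  unfolding cmap_def by simp

text \<open>The condition under which \<open>wmap C ds xs\<close>, the map \<open>x\<^sub>1 * \<dots> * x\<^sub>k\<close>, is defined.\<close>

definition composable :: "'c cset \<Rightarrow> nat list \<Rightarrow> 'c list \<Rightarrow> bool" where
  "composable C ds xs \<longleftrightarrow> (\<forall>i<length ds. xs ! i \<in> cells C (ds ! i)) \<and>
     (\<forall>i. Suc i < length ds \<longrightarrow> act C 0 (ds ! i) (constv 0 (top_v (ds ! i))) (xs ! i) =
            act C 0 (ds ! Suc i) (constv 0 (bot_v (ds ! Suc i))) (xs ! Suc i))"

lemma wmap_bcell: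
  assumes "gluable ds" and C: "cubical_set C" and xs: "composable C ds xs"
  shows "wmap C ds xs m (bcell ds m i f) = act C m (ds ! i) f (xs ! i)"
proof -
  let ?F = "\<lambda>(i, f). act C m (ds ! i) f (xs ! i)"
  have "?F x = ?F y" if "(x, y) \<in> glue ds m" for x y
  proof -
    from that obtain l where l: "Suc l < length ds"
      and xy: "x = (l, constv m (top_v (ds ! l)))" "y = (Suc l, constv m (bot_v (ds ! Suc l)))"
      by (auto simp: mem_glue)
    have cells: "xs ! l \<in> cells C (ds ! l)" "xs ! Suc l \<in> cells C (ds ! Suc l)"
      using xs l by (simp_all add: composable_def)
    show ?thesis
      using xs l unfolding xy
      by (simp add: cubical_act_constv[where m = m, OF C cells(1) length_top_v]
          cubical_act_constv[where m = m, OF C cells(2) length_bot_v] composable_def)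
  qed
  then have "the_elem (?F ` bcell ds m i f) = ?F (i, f)"
    by (rule the_elem_image_bcell[OF assms(1)])
  then show ?thesis by (simp add: wmap_def)
qed

lemma cmap_wmap:
  assumes g: "gluable ds" and C: "cubical_set C" and xs: "composable C ds xs"
  shows "cmap (wedge ds) C (wmap C ds xs)"
  unfolding cmap_def
proof (intro conjI allI impI)
  fix n x assume "x \<in> cells (wedge ds) n"
  then obtain i f where "i < length ds" "box_hom n (ds ! i) f" "x = bcell ds n i f"
    by (auto simp: cells_wedge)
  then show "wmap C ds xs n x \<in> cells C n"
    using xs by (simp add: wmap_bcell[OF assms] composable_def cubical_act_cells[OF C])
next
  fix m n h x assume a: "box_hom m n h \<and> x \<in> cells (wedge ds) n"
  then obtain i f where i: "i < length ds" "box_hom n (ds ! i) f" "x = bcell ds n i f"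
    by (auto simp: cells_wedge)
  moreover have "xs ! i \<in> cells C (ds ! i)" using xs i by (simp add: composable_def)
  ultimately show "wmap C ds xs m (act (wedge ds) m n h x) = act C m n h (wmap C ds xs n x)"
    using a by (simp add: act_wedge[OF g] wmap_bcell[OF assms] cubical_act_comp[OF C])
qed

definition bead :: "nat list \<Rightarrow> nat \<Rightarrow> ncell" where
  "bead ds k = bcell ds (ds ! k) k (hext (ds ! k) id)"

lemma bead_in_cells: "k < length ds \<Longrightarrow> bead ds k \<in> cells (wedge ds) (ds ! k)"
  unfolding bead_def by (rule bcell_in_cells) (auto intro: bh_id)

lemma act_bead: "gluable ds \<Longrightarrow> box_hom m (ds ! k) h \<Longrightarrow> act (wedge ds) m (ds ! k) h (bead ds k) = bcell ds m k h"
  unfolding bead_def by (simp add: act_wedge hext_id_comp)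

lemma wmap_bead:
  "gluable ds \<Longrightarrow> cubical_set C \<Longrightarrow> composable C ds xs \<Longrightarrow> k < length ds \<Longrightarrow> wmap C ds xs (ds ! k) (bead ds k) = xs ! k"
  unfolding bead_def by (simp add: wmap_bcell cubical_act_id composable_def)

lemma cmap_wedge_eqI:
  assumes "gluable ds" and F: "cmap (wedge ds) C F" and G: "cmap (wedge ds) C G"
    and beads: "\<And>k. k < length ds \<Longrightarrow> F (ds ! k) (bead ds k) = G (ds ! k) (bead ds k)"
    and X: "X \<in> cells (wedge ds) m"
  shows "F m X = G m X"
proof -
  obtain k h where k: "k < length ds" "box_hom m (ds ! k) h" and "X = bcell ds m k h"
    using X by (auto simp: cells_wedge)
  then have X_eq: "X = act (wedge ds) m (ds ! k) h (bead ds k)"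
    by (simp add: act_bead[OF assms(1)])
  have "F m X = act C m (ds ! k) h (F (ds ! k) (bead ds k))"
    unfolding X_eq by (rule cmap_act[OF F k(2) bead_in_cells[OF k(1)]])
  also have "\<dots> = act C m (ds ! k) h (G (ds ! k) (bead ds k))"
    by (simp only: beads[OF k(1)])
  also have "\<dots> = G m X"
    unfolding X_eq by (rule cmap_act[OF G k(2) bead_in_cells[OF k(1)], symmetric])
  finally show ?thesis .
qed

definition bead_vertex :: "nat list \<Rightarrow> nat \<Rightarrow> bool list \<Rightarrow> bool" where
  "bead_vertex ns i v \<longleftrightarrow> i < length ns \<and> length v = ns ! i"

definition vtx :: "nat list \<Rightarrow> nat \<Rightarrow> bool list \<Rightarrow> ncell" where
  "vtx ns i v = bcell ns 0 i (constv 0 v)"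

lemma in_bead_iff: "in_bead ns i x v \<longleftrightarrow> bead_vertex ns i v \<and> x = vtx ns i v"
  unfolding in_bead_def bead_vertex_def vtx_def by auto

lemma vtx_eq_iff:
  assumes "gluable ns"
  shows "vtx ns i v = vtx ns i' v' \<longleftrightarrow> (i = i' \<and> v = v') \<or>
    (Suc i < length ns \<and> i' = Suc i \<and> v = top_v (ns ! i) \<and> v' = bot_v (ns ! i')) \<or>
    (Suc i' < length ns \<and> i = Suc i' \<and> v' = top_v (ns ! i') \<and> v = bot_v (ns ! i))"
  unfolding vtx_def bcell_eq_iff[OF assms] mem_glue by (auto simp: constv_eq_iff)

lemma vtx_top_eq_bot: "gluable ns \<Longrightarrow> Suc i < length ns \<Longrightarrow> vtx ns i (top_v (ns ! i)) = vtx ns (Suc i) (bot_v (ns ! Suc i))"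
  by (simp add: vtx_eq_iff)

lemma bcell_constv_eq:
  "gluable ns \<Longrightarrow> vtx ns l w = vtx ns l' w' \<Longrightarrow> bcell ns m l (constv m w) = bcell ns m l' (constv m w')"
  unfolding vtx_eq_iff bcell_eq_iff mem_glue by auto

lemma walpha_in_cells: "ds \<noteq> [] \<Longrightarrow> walpha ds \<in> cells (wedge ds) 0"
  unfolding walpha_def by (rule bcell_in_cells) (auto intro: box_hom_constv)

lemma womega_in_cells: "ds \<noteq> [] \<Longrightarrow> womega ds \<in> cells (wedge ds) 0"
  unfolding womega_def by (rule bcell_in_cells) (auto intro: box_hom_constv simp: last_conv_nth)

lemma walpha_eq: "walpha ds = vtx ds 0 (bot_v (ds ! 0))"
  by (simp add: walpha_def vtx_def)

lemma womega_eq: "ds \<noteq> [] \<Longrightarrow> womega ds = vtx ds (length ds - 1) (top_v (ds ! (length ds - 1)))"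
  by (simp add: womega_def vtx_def last_conv_nth)

lemma act_bcell_vertex:
  assumes "gluable ns" "length w = k"
  shows "act (wedge ns) 0 k (constv 0 w) (bcell ns k l \<sigma>) = vtx ns l (\<sigma> w)"
  using act_wedge[OF assms(1) box_hom_constv[OF assms(2)]] by (simp add: vtx_def hext_comp_constv)

lemma act_bead_vertex:
  "gluable ds \<Longrightarrow> length w = ds ! k \<Longrightarrow> act (wedge ds) 0 (ds ! k) (constv 0 w) (bead ds k) = vtx ds k w"
  by (simp add: act_bead box_hom_constv vtx_def)

section \<open>The order on vertices\<close>

text \<open>A vertex is written canonically in the last bead containing it.\<close>

definition canonical :: "nat list \<Rightarrow> nat \<Rightarrow> bool list \<Rightarrow> bool" where
  "canonical ns p c \<longleftrightarrow> bead_vertex ns p c \<and> \<not> (c = top_v (ns ! p) \<and> Suc p < length ns)"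

lemma canonical_exists:
  assumes "gluable ns" "bead_vertex ns i v"
  obtains p c where "canonical ns p c" "vtx ns p c = vtx ns i v"
proof (cases "v = top_v (ns ! i) \<and> Suc i < length ns")
  case True
  then have "canonical ns (Suc i) (bot_v (ns ! Suc i))"
    using assms(1) by (auto simp: canonical_def bead_vertex_def gluable_def top_ne_bot[symmetric])
  with True show ?thesis
    using that assms(1) by (simp add: vtx_top_eq_bot)
next
  case False
  with assms(2) show ?thesis
    using that by (simp add: canonical_def)
qed

lemma in_bead_canonical_iff:
  assumes "gluable ns" "canonical ns p c"
  shows "in_bead ns k (vtx ns p c) w \<longleftrightarrow>
    (k = p \<and> w = c) \<or> (Suc k = p \<and> c = bot_v (ns ! p) \<and> w = top_v (ns ! k))"
  unfolding in_bead_iff using assms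
  by (auto simp: vtx_eq_iff bead_vertex_def canonical_def)

lemma canonical_unique:
  assumes "gluable ns" "canonical ns p c" "canonical ns q d" "vtx ns p c = vtx ns q d"
  shows "p = q \<and> c = d"
proof -
  have "in_bead ns q (vtx ns p c) d"
    using assms(3,4) by (simp add: in_bead_iff canonical_def)
  then show ?thesis
    using assms(2,3) by (auto simp: in_bead_canonical_iff[OF assms(1,2)] canonical_def bead_vertex_def)
qed

definition lex_le :: "nat \<times> bool list \<Rightarrow> nat \<times> bool list \<Rightarrow> bool" where
  "lex_le x y \<longleftrightarrow> fst x < fst y \<or> (fst x = fst y \<and> vle (snd x) (snd y))"

lemma lex_le_trans: "lex_le x y \<Longrightarrow> lex_le y z \<Longrightarrow> lex_le x z"
  unfolding lex_le_def using vle_trans by auto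

lemma prec_canonical_iff:
  assumes g: "gluable ns" and c: "canonical ns p c" and d: "canonical ns q d"
  shows "prec ns (vtx ns p c) (vtx ns q d) \<longleftrightarrow> lex_le (p, c) (q, d)"
proof
  assume "prec ns (vtx ns p c) (vtx ns q d)"
  then consider
      (same) k u v where "in_bead ns k (vtx ns p c) u" "in_bead ns k (vtx ns q d) v" "vle u v"
    | (earlier) k l u v where "k < l" "in_bead ns k (vtx ns p c) u" "in_bead ns l (vtx ns q d) v"
    unfolding prec_def by blast
  then show "lex_le (p, c) (q, d)"
  proof cases
    case same
    then show ?thesis
      using c d unfolding in_bead_canonical_iff[OF g c] in_bead_canonical_iff[OF g d]
      by (auto simp: lex_le_def canonical_def bead_vertex_def bot_v_vle_iff top_v_vle_iff)
  next
    case earlier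
    have p: "p = k \<or> (p = Suc k \<and> c = bot_v (ns ! p))"
      using earlier(2) by (auto simp: in_bead_canonical_iff[OF g c])
    have q: "l \<le> q"
      using earlier(3) by (auto simp: in_bead_canonical_iff[OF g d])
    show ?thesis
    proof (cases "p < q")
      case False
      with p q earlier(1) have "p = q" "c = bot_v (ns ! p)" by auto
      then show ?thesis
        using d by (simp add: lex_le_def canonical_def bead_vertex_def bot_v_vle_iff)
    qed (simp add: lex_le_def)
  qed
next
  assume "lex_le (p, c) (q, d)"
  moreover have "in_bead ns p (vtx ns p c) c" "in_bead ns q (vtx ns q d) d"
    using c d by (auto simp: in_bead_iff canonical_def)
  ultimately show "prec ns (vtx ns p c) (vtx ns q d)"
    unfolding prec_def lex_le_def by (auto 0 4)
qed

lemma prec_canonicalE: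
  assumes g: "gluable ns" and "prec ns x y"
  obtains p c q d where "canonical ns p c" "canonical ns q d" "x = vtx ns p c" "y = vtx ns q d"
    "lex_le (p, c) (q, d)"
proof -
  obtain i u j v where "bead_vertex ns i u" "x = vtx ns i u" "bead_vertex ns j v" "y = vtx ns j v"
    using assms(2) unfolding prec_def in_bead_iff by blast
  then obtain p c q d where "canonical ns p c" "x = vtx ns p c" "canonical ns q d" "y = vtx ns q d"
    using canonical_exists[OF g] by metis
  with assms that show thesis
    using prec_canonical_iff[OF g] by blast
qed

lemma prec_between_canonicalE:
  assumes g: "gluable ns" and "prec ns a x" "prec ns x b"
  obtains pa ca k w pb cb where "canonical ns pa ca" "canonical ns k w" "canonical ns pb cb"
    "a = vtx ns pa ca" "x = vtx ns k w" "b = vtx ns pb cb"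
    "lex_le (pa, ca) (k, w)" "lex_le (k, w) (pb, cb)"
proof -
  obtain pa ca k w where "canonical ns pa ca" and k: "canonical ns k w"
    and "a = vtx ns pa ca" and x: "x = vtx ns k w" and "lex_le (pa, ca) (k, w)"
    using prec_canonicalE[OF g assms(2)] by metis
  moreover obtain k' w' pb cb where k': "canonical ns k' w'" and "canonical ns pb cb"
    and x': "x = vtx ns k' w'" and "b = vtx ns pb cb" and "lex_le (k', w') (pb, cb)"
    using prec_canonicalE[OF g assms(3)] by metis
  moreover have "k' = k \<and> w' = w"
    using canonical_unique[OF g k' k] x x' by simp
  ultimately show thesis using that by blast
qed

lemma prec_trans:
  assumes g: "gluable ns" and "prec ns x y" "prec ns y z"
  shows "prec ns x z"
proof -
  obtain p c q d r e where pc: "canonical ns p c" and re: "canonical ns r e"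
    and x: "x = vtx ns p c" and z: "z = vtx ns r e"
    and pq: "lex_le (p, c) (q, d)" and qr: "lex_le (q, d) (r, e)"
    using prec_between_canonicalE[OF g assms(2,3)] by metis
  from pq qr have "lex_le (p, c) (r, e)" by (rule lex_le_trans)
  then show ?thesis using prec_canonical_iff[OF g pc re] x z by simp
qed

lemma prec_bead: "bead_vertex ns i u \<Longrightarrow> bead_vertex ns i v \<Longrightarrow> vle u v \<Longrightarrow> prec ns (vtx ns i u) (vtx ns i v)"
  unfolding prec_def in_bead_iff by blast

section \<open>A criterion for terminality\<close>

lemma cmap_lift_through_injective:
  assumes ds: "gluable ds" and X: "cubical_set X" and t: "cmap X C t" and f: "cmap (wedge ds) C f"
    and inj: "\<And>m. inj_on (t m) (cells X m)"
    and lift: "\<And>k. k < length ds \<Longrightarrow> f (ds ! k) (bead ds k) \<in> t (ds ! k) ` cells X (ds ! k)"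
  obtains g where "cmap (wedge ds) X g" and "\<And>m x. x \<in> cells (wedge ds) m \<Longrightarrow> t m (g m x) = f m x"
proof -
  let ?P = "\<lambda>k y. y \<in> cells X (ds ! k) \<and> t (ds ! k) y = f (ds ! k) (bead ds k)"
  define ys where "ys = map (\<lambda>k. SOME y. ?P k y) [0..<length ds]"
  have ys: "?P k (ys ! k)" if "k < length ds" for k
  proof -
    have "\<exists>y. ?P k y" using lift[OF that] by auto
    then have "?P k (SOME y. ?P k y)" by (rule someI_ex)
    then show ?thesis unfolding ys_def using that by simp
  qed
  have ys_vertex: "t 0 (act X 0 (ds ! k) (constv 0 w) (ys ! k)) = f 0 (vtx ds k w)"
    if "k < length ds" "length w = ds ! k" for k w
    using cmap_act[OF t box_hom_constv[OF that(2), of 0] ys[OF that(1), THEN conjunct1]]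
      cmap_act[OF f box_hom_constv[OF that(2), of 0] bead_in_cells[OF that(1)]]
      ys[OF that(1)] act_bead_vertex[OF ds that(2)]
    by simp
  have ys_vertex_cell: "act X 0 (ds ! k) (constv 0 w) (ys ! k) \<in> cells X 0"
    if "k < length ds" "length w = ds ! k" for k w
    using cubical_act_cells[OF X box_hom_constv[OF that(2)] ys[OF that(1), THEN conjunct1]] .
  have "composable X ds ys"
    unfolding composable_def
  proof (intro conjI allI impI)
    fix k assume k: "Suc k < length ds"
    then have "t 0 (act X 0 (ds ! k) (constv 0 (top_v (ds ! k))) (ys ! k)) =
               t 0 (act X 0 (ds ! Suc k) (constv 0 (bot_v (ds ! Suc k))) (ys ! Suc k))"
      by (simp add: ys_vertex vtx_top_eq_bot[OF ds])
    then show "act X 0 (ds ! k) (constv 0 (top_v (ds ! k))) (ys ! k) =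
               act X 0 (ds ! Suc k) (constv 0 (bot_v (ds ! Suc k))) (ys ! Suc k)"
      by (rule inj_onD[OF inj[of 0]]) (use k in \<open>simp_all add: ys_vertex_cell\<close>)
  qed (use ys in blast)
  then have g: "cmap (wedge ds) X (wmap X ds ys)"
    by (rule cmap_wmap[OF ds X])
  moreover have "t m (wmap X ds ys m x) = f m x" if "x \<in> cells (wedge ds) m" for m x
    using cmap_wedge_eqI[OF ds cmap_comp[OF g t] f _ that]
      wmap_bead[OF ds X \<open>composable X ds ys\<close>] ys
    by simp
  ultimately show thesis by (rule that)
qed

lemma cmap_bead_image:
  assumes ds: "gluable ds" and ns: "gluable ns" and f: "cmap (wedge ds) (wedge ns) f" and k: "k < length ds"
  obtains l \<sigma> where "l < length ns" "box_hom (ds ! k) (ns ! l) \<sigma>"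
    "f (ds ! k) (bead ds k) = bcell ns (ds ! k) l \<sigma>"
    "\<And>w. length w = ds ! k \<Longrightarrow> f 0 (vtx ds k w) = vtx ns l (\<sigma> w)"
proof -
  obtain l \<sigma> where l\<sigma>: "l < length ns" "box_hom (ds ! k) (ns ! l) \<sigma>"
    and image: "f (ds ! k) (bead ds k) = bcell ns (ds ! k) l \<sigma>"
    using cmap_cells[OF f bead_in_cells[OF k]] by (auto simp: cells_wedge)
  moreover have "f 0 (vtx ds k w) = vtx ns l (\<sigma> w)" if w: "length w = ds ! k" for w
    using cmap_act[OF f box_hom_constv[OF w, of 0] bead_in_cells[OF k]]
    by (simp add: act_bead_vertex[OF ds w] image act_bcell_vertex[OF ns w])
  ultimately show thesis by (rule that)
qed

lemma cmap_vertex_prec: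
  assumes ds: "gluable ds" and ns: "gluable ns" and f: "cmap (wedge ds) (wedge ns) f" and k: "k < length ds"
    and uw: "vle u w" and u: "length u = ds ! k"
  shows "prec ns (f 0 (vtx ds k u)) (f 0 (vtx ds k w))"
proof -
  obtain l \<sigma> where l: "l < length ns" and \<sigma>: "box_hom (ds ! k) (ns ! l) \<sigma>"
    and "f (ds ! k) (bead ds k) = bcell ns (ds ! k) l \<sigma>"
    and vertices: "\<And>w. length w = ds ! k \<Longrightarrow> f 0 (vtx ds k w) = vtx ns l (\<sigma> w)"
    using cmap_bead_image[OF ds ns f k] by blast
  have w: "length w = ds ! k" using uw u by (simp add: vle_length)
  have "prec ns (vtx ns l (\<sigma> u)) (vtx ns l (\<sigma> w))"
    using l box_hom_length[OF \<sigma> u] box_hom_length[OF \<sigma> w] box_hom_mono[OF \<sigma> uw u]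
    by (intro prec_bead) (simp_all add: bead_vertex_def)
  then show ?thesis by (simp add: vertices u w)
qed

lemma nec_obj_source_prec:
  assumes ns: "necklace ns" and f: "nec_obj (wedge ns) a b ds f" and k: "k < length ds"
    and w: "length w = ds ! k"
  shows "prec ns a (f 0 (vtx ds k w))"
proof -
  have ds: "gluable ds" and fc: "cmap (wedge ds) (wedge ns) f" and a: "f 0 (walpha ds) = a"
    using f by (auto simp: nec_obj_def necklace_gluable)
  note vertex_prec = cmap_vertex_prec[OF ds necklace_gluable[OF ns] fc]
  from k w show ?thesis
  proof (induction k arbitrary: w)
    case 0
    then show ?case
      using vertex_prec[of 0 "bot_v (ds ! 0)" w] a by (simp add: walpha_eq bot_v_vle_iff)
  next
    case (Suc k)
    then have "prec ns a (f 0 (vtx ds (Suc k) (bot_v (ds ! Suc k))))"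
      using Suc.IH[of "top_v (ds ! k)"] by (simp add: vtx_top_eq_bot[OF ds])
    moreover have "prec ns (f 0 (vtx ds (Suc k) (bot_v (ds ! Suc k)))) (f 0 (vtx ds (Suc k) w))"
      using Suc.prems by (intro vertex_prec) (simp_all add: bot_v_vle_iff)
    ultimately show ?case
      by (rule prec_trans[OF necklace_gluable[OF ns]])
  qed
qed

lemma nec_obj_target_prec:
  assumes ns: "necklace ns" and f: "nec_obj (wedge ns) a b ds f" and k: "k < length ds"
    and w: "length w = ds ! k"
  shows "prec ns (f 0 (vtx ds k w)) b"
proof -
  have ds: "gluable ds" and fc: "cmap (wedge ds) (wedge ns) f" and b: "f 0 (womega ds) = b"
    using f by (auto simp: nec_obj_def necklace_gluable)
  note vertex_prec = cmap_vertex_prec[OF ds necklace_gluable[OF ns] fc]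
  from k have "k \<le> length ds - 1" by simp
  then show ?thesis
    using w
  proof (induction k arbitrary: w rule: inc_induct)
    case base
    from k have "ds \<noteq> []" "length ds - 1 < length ds" by auto
    with base show ?case
      using vertex_prec[of "length ds - 1" w "top_v (ds ! (length ds - 1))"] b
      by (simp add: womega_eq vle_top_v_iff)
  next
    case (step k)
    then have "prec ns (f 0 (vtx ds k w)) (f 0 (vtx ds k (top_v (ds ! k))))"
      by (intro vertex_prec) (simp_all add: vle_top_v_iff)
    moreover have "prec ns (f 0 (vtx ds k (top_v (ds ! k)))) b"
      using step.hyps step.IH[of "bot_v (ds ! Suc k)"] by (simp add: vtx_top_eq_bot[OF ds])
    ultimately show ?case
      by (rule prec_trans[OF necklace_gluable[OF ns]])
  qed
qed

lemma nec_obj_bead_between: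
  assumes ns: "necklace ns" and f: "nec_obj (wedge ns) a b ds f" and k: "k < length ds"
  obtains l \<sigma> where "l < length ns" "box_hom (ds ! k) (ns ! l) \<sigma>"
    "f (ds ! k) (bead ds k) = bcell ns (ds ! k) l \<sigma>"
    "prec ns a (vtx ns l (\<sigma> (bot_v (ds ! k))))" "prec ns (vtx ns l (\<sigma> (top_v (ds ! k)))) b"
proof -
  have ds: "gluable ds" and fc: "cmap (wedge ds) (wedge ns) f"
    using f by (auto simp: nec_obj_def necklace_gluable)
  obtain l \<sigma> where l: "l < length ns" and \<sigma>: "box_hom (ds ! k) (ns ! l) \<sigma>"
    and image: "f (ds ! k) (bead ds k) = bcell ns (ds ! k) l \<sigma>"
    and vertices: "\<And>w. length w = ds ! k \<Longrightarrow> f 0 (vtx ds k w) = vtx ns l (\<sigma> w)"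
    using cmap_bead_image[OF ds necklace_gluable[OF ns] fc k] by blast
  show thesis
  proof (rule that[OF l \<sigma> image])
    show "prec ns a (vtx ns l (\<sigma> (bot_v (ds ! k))))"
      using nec_obj_source_prec[OF ns f k, of "bot_v (ds ! k)"] by (simp add: vertices)
    show "prec ns (vtx ns l (\<sigma> (top_v (ds ! k)))) b"
      using nec_obj_target_prec[OF ns f k, of "top_v (ds ! k)"] by (simp add: vertices)
  qed
qed

lemma nec_obj_lift:
  assumes ns: "necklace ns" and t: "nec_obj (wedge ns) a b es t"
    and inj: "\<And>m. inj_on (t m) (cells (wedge es) m)"
    and covers: "\<And>m l \<sigma>. l < length ns \<Longrightarrow> box_hom m (ns ! l) \<sigma> \<Longrightarrow>
        prec ns a (vtx ns l (\<sigma> (bot_v m))) \<Longrightarrow> prec ns (vtx ns l (\<sigma> (top_v m))) b \<Longrightarrow>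
        bcell ns m l \<sigma> \<in> t m ` cells (wedge es) m"
    and f: "nec_obj (wedge ns) a b ds f"
  obtains g where "nec_hom ds es g" "over ds t g f"
proof -
  have es: "gluable es" and tc: "cmap (wedge es) (wedge ns) t"
    and ta: "t 0 (walpha es) = a" and tb: "t 0 (womega es) = b" and es_ne: "es \<noteq> []"
    using t by (auto simp: nec_obj_def necklace_gluable necklace_def)
  have ds: "gluable ds" and fc: "cmap (wedge ds) (wedge ns) f" and ds_ne: "ds \<noteq> []"
    and fa: "f 0 (walpha ds) = a" and fb: "f 0 (womega ds) = b"
    using f by (auto simp: nec_obj_def necklace_gluable necklace_def)
  have "f (ds ! k) (bead ds k) \<in> t (ds ! k) ` cells (wedge es) (ds ! k)" if k: "k < length ds" for k
    using nec_obj_bead_between[OF ns f k] covers by metis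
  then obtain g where gc: "cmap (wedge ds) (wedge es) g"
    and over: "\<And>m x. x \<in> cells (wedge ds) m \<Longrightarrow> t m (g m x) = f m x"
    using cmap_lift_through_injective[OF ds cubical_wedge[OF es] tc fc inj] by blast
  have "g 0 (walpha ds) = walpha es"
    by (rule inj_onD[OF inj[of 0]])
       (simp_all add: over walpha_in_cells ds_ne es_ne fa ta cmap_cells[OF gc])
  moreover have "g 0 (womega ds) = womega es"
    by (rule inj_onD[OF inj[of 0]])
       (simp_all add: over womega_in_cells ds_ne es_ne fb tb cmap_cells[OF gc])
  ultimately show thesis
    using that gc over by (auto simp: nec_hom_def over_def)
qed

lemma over_unique:
  assumes ds: "gluable ds" and inj: "\<And>m. inj_on (t m) (cells (wedge es) m)"
    and g: "nec_hom ds es g" "over ds t g f" and g': "nec_hom ds es g'" "over ds t g' f"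
    and x: "x \<in> cells (wedge ds) m"
  shows "g m x = g' m x"
proof (rule cmap_wedge_eqI[OF ds _ _ _ x])
  show gc: "cmap (wedge ds) (wedge es) g" and g'c: "cmap (wedge ds) (wedge es) g'"
    using g g' by (simp_all add: nec_hom_def)
  fix k assume k: "k < length ds"
  show "g (ds ! k) (bead ds k) = g' (ds ! k) (bead ds k)"
    by (rule inj_onD[OF inj[of "ds ! k"]])
       (use g g' bead_in_cells[OF k] in \<open>simp_all add: over_def cmap_cells[OF gc] cmap_cells[OF g'c]\<close>)
qed

text \<open>Every necklace over \<open>T\<^sub>a\<^sub>,\<^sub>b\<close> has its beads in the interval \<open>[a, b]\<close>, so an injective one
  whose image contains all cubes of \<open>T\<close> in that interval is terminal.\<close>

lemma nec_terminalI:
  assumes ns: "necklace ns" and t: "nec_obj (wedge ns) a b es t"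
    and inj: "\<And>m. inj_on (t m) (cells (wedge es) m)"
    and covers: "\<And>m l \<sigma>. l < length ns \<Longrightarrow> box_hom m (ns ! l) \<sigma> \<Longrightarrow>
        prec ns a (vtx ns l (\<sigma> (bot_v m))) \<Longrightarrow> prec ns (vtx ns l (\<sigma> (top_v m))) b \<Longrightarrow>
        bcell ns m l \<sigma> \<in> t m ` cells (wedge es) m"
  shows "nec_terminal (wedge ns) a b es t"
  unfolding nec_terminal_def
proof (intro conjI allI impI)
  fix ds f assume f: "nec_obj (wedge ns) a b ds f"
  show "\<exists>g. nec_hom ds es g \<and> over ds t g f"
    using nec_obj_lift[OF ns t inj covers f] by blast
next
  fix ds f g g' m x
  assume f: "nec_obj (wedge ns) a b ds f"
    and gg': "nec_hom ds es g \<and> over ds t g f \<and> nec_hom ds es g' \<and> over ds t g' f"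
    and x: "x \<in> cells (wedge ds) m"
  have "gluable ds" using f by (simp add: nec_obj_def necklace_gluable)
  then show "g m x = g' m x"
    by (rule over_unique[where f = f, OF _ inj _ _ _ _ x]) (use gg' in simp_all)
qed (use t in simp)

section \<open>Subnecklaces\<close>

text \<open>The data of a subnecklace \<open>T\<^sub>[\<^sub>a\<^sub>,\<^sub>b\<^sub>]\<close>: the beads \<open>i..j\<close> of \<open>T\<close>, bead \<open>l\<close> cut down to its face
  between the vertices \<open>L l\<close> and \<open>U l\<close>.\<close>

locale interval_chain =
  fixes ns :: "nat list" and i j :: nat and L U :: "nat \<Rightarrow> bool list"
  assumes necklace: "necklace ns"
    and i_le_j: "i \<le> j" and j_less: "j < length ns"
    and interval: "\<And>l. i \<le> l \<Longrightarrow> l \<le> j \<Longrightarrow> length (L l) = ns ! l \<and> vle (L l) (U l)"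
    and L_bot: "\<And>l. i < l \<Longrightarrow> l \<le> j \<Longrightarrow> L l = bot_v (ns ! l)"
    and U_top: "\<And>l. i \<le> l \<Longrightarrow> l < j \<Longrightarrow> U l = top_v (ns ! l)"
    and ends_proper: "i < j \<Longrightarrow> L i \<noteq> U i \<and> L j \<noteq> U j"
begin

definition chain_data :: "(nat \<times> ncell) list" where
  "chain_data = map (\<lambda>l. (vdist (L l) (U l), bcell ns (vdist (L l) (U l)) l (iota (L l) (U l)))) [i..<Suc j]"

definition dims :: "nat list" where
  "dims = map fst chain_data"

definition incl :: "nat \<Rightarrow> ncell \<Rightarrow> ncell" where
  "incl = wmap (wedge ns) dims (map snd chain_data)"

lemma gluable: "gluable ns"
  using necklace by (rule necklace_gluable)

lemma length_dims: "length dims = Suc (j - i)"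
  using i_le_j by (simp add: dims_def chain_data_def)

lemma nth_dims: "p \<le> j - i \<Longrightarrow> dims ! p = vdist (L (i + p)) (U (i + p))"
  using i_le_j by (simp add: dims_def chain_data_def del: upt_Suc)

lemma nth_cubes:
  "p \<le> j - i \<Longrightarrow> map snd chain_data ! p = bcell ns (dims ! p) (i + p) (iota (L (i + p)) (U (i + p)))"
  using i_le_j by (simp add: nth_dims chain_data_def del: upt_Suc)

lemma faces_proper: "i < j \<Longrightarrow> i \<le> l \<Longrightarrow> l \<le> j \<Longrightarrow> L l \<noteq> U l"
proof -
  assume ij: "i < j" and l: "i \<le> l" "l \<le> j"
  show "L l \<noteq> U l"
  proof (cases "l = i \<or> l = j")
    case False
    have "ns \<noteq> [0]" using ij j_less by auto
    then have "0 < ns ! l" using necklace l j_less by (auto simp: necklace_def)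
    with False l show ?thesis by (simp add: L_bot U_top top_ne_bot[symmetric])
  qed (use ends_proper ij in auto)
qed

lemma necklace_dims: "necklace dims"
proof (cases "i < j")
  case True
  then have "\<forall>d \<in> set dims. 0 < d"
    using interval faces_proper by (auto simp: dims_def chain_data_def vdist_pos simp del: upt_Suc)
  then show ?thesis using length_dims by (auto simp: necklace_def)
next
  case False
  then have "i = j" using i_le_j by simp
  then have "dims = [vdist (L i) (U i)]" unfolding dims_def chain_data_def by simp
  then show ?thesis by (auto simp: necklace_def)
qed

lemma gluable_dims: "gluable dims"
  using necklace_dims by (rule necklace_gluable)

lemma cube_vertex:
  assumes p: "p \<le> j - i" and x: "length x = dims ! p"
  shows "act (wedge ns) 0 (dims ! p) (constv 0 x) (map snd chain_data ! p) =
    vtx ns (i + p) (fill (L (i + p)) (U (i + p)) x)"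
  using x nth_dims[OF p] by (simp add: nth_cubes[OF p] act_bcell_vertex[OF gluable] iota_apply)

lemma composable_cubes: "composable (wedge ns) dims (map snd chain_data)"
  unfolding composable_def
proof (intro conjI allI impI)
  fix p assume "p < length dims"
  then have p: "p \<le> j - i" by (simp add: length_dims)
  then have "length (L (i + p)) = ns ! (i + p)" "vle (L (i + p)) (U (i + p))" "i + p < length ns"
    using interval[of "i + p"] i_le_j j_less by auto
  then show "map snd chain_data ! p \<in> cells (wedge ns) (dims ! p)"
    unfolding nth_cubes[OF p] nth_dims[OF p] using box_hom_iota[of "L (i + p)" "U (i + p)"]
    by (intro bcell_in_cells) auto
next
  fix p assume "Suc p < length dims"
  then have p: "p < j - i" by (simp add: length_dims)
  have "act (wedge ns) 0 (dims ! p) (constv 0 (top_v (dims ! p))) (map snd chain_data ! p) =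
    vtx ns (i + p) (U (i + p))"
    using cube_vertex[of p "top_v (dims ! p)"] p interval[of "i + p"] by (simp add: nth_dims fill_top)
  also have "\<dots> = vtx ns (i + Suc p) (L (i + Suc p))"
    using p j_less by (simp add: U_top L_bot vtx_top_eq_bot[OF gluable])
  also have "\<dots> = act (wedge ns) 0 (dims ! Suc p) (constv 0 (bot_v (dims ! Suc p))) (map snd chain_data ! Suc p)"
    using cube_vertex[of "Suc p" "bot_v (dims ! Suc p)"] p interval[of "i + Suc p"]
    by (simp add: nth_dims fill_bot)
  finally show "act (wedge ns) 0 (dims ! p) (constv 0 (top_v (dims ! p))) (map snd chain_data ! p) =
    act (wedge ns) 0 (dims ! Suc p) (constv 0 (bot_v (dims ! Suc p))) (map snd chain_data ! Suc p)" .
qed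

lemma cmap_incl: "cmap (wedge dims) (wedge ns) incl"
  unfolding incl_def by (rule cmap_wmap[OF gluable_dims cubical_wedge[OF gluable] composable_cubes])

lemma incl_bcell:
  assumes p: "p \<le> j - i" and h: "box_hom m (dims ! p) h"
  shows "incl m (bcell dims m p h) = bcell ns m (i + p) (hext m (iota (L (i + p)) (U (i + p)) \<circ> h))"
  unfolding incl_def
  using h nth_dims[OF p]
  by (simp add: wmap_bcell[OF gluable_dims cubical_wedge[OF gluable] composable_cubes]
      nth_cubes[OF p] act_wedge[OF gluable])

lemma incl_vertex:
  assumes p: "p \<le> j - i" and x: "length x = dims ! p"
  shows "incl 0 (vtx dims p x) = vtx ns (i + p) (fill (L (i + p)) (U (i + p)) x)"
  using incl_bcell[OF p box_hom_constv[OF x]] x nth_dims[OF p]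
  by (simp add: vtx_def hext_comp_constv iota_apply)

lemma nec_obj_incl: "nec_obj (wedge ns) (vtx ns i (L i)) (vtx ns j (U j)) dims incl"
proof -
  have "incl 0 (walpha dims) = vtx ns i (L i)"
    using incl_vertex[of 0 "bot_v (dims ! 0)"] interval[of i] i_le_j
    by (simp add: walpha_eq nth_dims fill_bot)
  moreover have "incl 0 (womega dims) = vtx ns j (U j)"
    using incl_vertex[of "j - i" "top_v (dims ! (j - i))"] interval[of j] i_le_j length_dims
      womega_eq[of dims]
    by (fastforce simp: nth_dims fill_top)
  ultimately show ?thesis
    by (simp add: nec_obj_def necklace_dims cmap_incl)
qed


lemma interval_at: "p \<le> j - i \<Longrightarrow> length (L (i + p)) = ns ! (i + p) \<and> vle (L (i + p)) (U (i + p))"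
  using interval i_le_j by simp

lemma incl_glue_reflect:
  assumes p: "p \<le> j - i" and q: "q \<le> j - i"
    and h: "box_hom m (dims ! p) h" and k: "box_hom m (dims ! q) k"
    and glued: "((i + p, hext m (iota (L (i + p)) (U (i + p)) \<circ> h)),
                 (i + q, hext m (iota (L (i + q)) (U (i + q)) \<circ> k))) \<in> glue ns m"
  shows "bcell dims m p h = bcell dims m q k"
proof -
  have q_eq: "q = Suc p"
    and top: "hext m (iota (L (i + p)) (U (i + p)) \<circ> h) = constv m (top_v (ns ! (i + p)))"
    and bot: "hext m (iota (L (i + q)) (U (i + q)) \<circ> k) = constv m (bot_v (ns ! (i + q)))"
    using glued by (auto simp: mem_glue)
  have Lp: "length (L (i + p)) = ns ! (i + p)" "vle (L (i + p)) (U (i + p))"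
    using interval_at[OF p] by auto
  have Lq: "length (L (i + q)) = ns ! (i + q)" "vle (L (i + q)) (U (i + q))"
    using interval_at[OF q] by auto
  have "h = constv m (top_v (dims ! p))"
    using iota_comp_eq_constv[OF Lp(2) _ top] h Lp proj_top[of "L (i + p)" "U (i + p)"]
    by (simp add: nth_dims[OF p] vle_length)
  moreover have "k = constv m (bot_v (dims ! q))"
    using iota_comp_eq_constv[OF Lq(2) _ bot] k Lq proj_bot[of "L (i + q)" "U (i + q)"]
    by (simp add: nth_dims[OF q] vle_length)
  ultimately show ?thesis
    using q q_eq length_dims by (simp add: bcell_eq_iff[OF gluable_dims] mem_glue)
qed

lemma inj_incl: "inj_on (incl m) (cells (wedge dims) m)"
proof (rule inj_onI)
  fix X Y assume X: "X \<in> cells (wedge dims) m" and Y: "Y \<in> cells (wedge dims) m"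
    and eq: "incl m X = incl m Y"
  obtain p h where p: "p \<le> j - i" and h: "box_hom m (dims ! p) h" and X_eq: "X = bcell dims m p h"
    using X by (auto simp: cells_wedge length_dims less_Suc_eq_le)
  obtain q k where q: "q \<le> j - i" and k: "box_hom m (dims ! q) k" and Y_eq: "Y = bcell dims m q k"
    using Y by (auto simp: cells_wedge length_dims less_Suc_eq_le)
  let ?h = "hext m (iota (L (i + p)) (U (i + p)) \<circ> h)" and ?k = "hext m (iota (L (i + q)) (U (i + q)) \<circ> k)"
  from eq have "bcell ns m (i + p) ?h = bcell ns m (i + q) ?k"
    by (simp add: X_eq Y_eq incl_bcell[OF p h] incl_bcell[OF q k])
  then consider "p = q" "?h = ?k" | "((i + p, ?h), (i + q, ?k)) \<in> glue ns m" | "((i + q, ?k), (i + p, ?h)) \<in> glue ns m"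
    by (auto simp: bcell_eq_iff[OF gluable])
  then show "X = Y"
  proof cases
    case 1
    have "h x = k x" if x: "length x = m" for x
    proof (rule iota_inj)
      show "vle (L (i + p)) (U (i + p))" using interval_at[OF p] by simp
      show "length (h x) = vdist (L (i + p)) (U (i + p))" "length (k x) = vdist (L (i + p)) (U (i + p))"
        using box_hom_length[OF h x] box_hom_length[OF k x] 1(1) nth_dims[OF p] by simp_all
      show "iota (L (i + p)) (U (i + p)) (h x) = iota (L (i + p)) (U (i + p)) (k x)"
        using fun_cong[OF 1(2), of x] x 1(1) by (simp add: hext_apply)
    qed
    then have "h = k" using box_hom_eqI[OF h] k 1(1) by simp
    with 1 show ?thesis by (simp add: X_eq Y_eq)
  next
    case 2
    then show ?thesis using incl_glue_reflect[OF p q h k] by (simp add: X_eq Y_eq)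
  next
    case 3
    then show ?thesis using incl_glue_reflect[OF q p k h] by (simp add: X_eq Y_eq)
  qed
qed


lemma vertex_in_chain:
  assumes ax: "prec ns (vtx ns i (L i)) x" and xb: "prec ns x (vtx ns j (U j))"
  obtains l w where "i \<le> l" "l \<le> j" "x = vtx ns l w" "vle (L l) w" "vle w (U l)"
proof -
  obtain pa ca k w pb cb where a_can: "canonical ns pa ca" and k_can: "canonical ns k w"
    and b_can: "canonical ns pb cb" and a_eq: "vtx ns i (L i) = vtx ns pa ca" and x_eq: "x = vtx ns k w"
    and b_eq: "vtx ns j (U j) = vtx ns pb cb" and ak: "lex_le (pa, ca) (k, w)" and kb: "lex_le (k, w) (pb, cb)"
    using prec_between_canonicalE[OF gluable ax xb] by metis
  have Li: "length (L i) = ns ! i" "vle (L i) (U i)" and Uj: "length (U j) = ns ! j" "vle (L j) (U j)"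
    using interval[of i] interval[of j] i_le_j by (auto simp: vle_length)
  have "in_bead ns i (vtx ns pa ca) (L i)" "in_bead ns j (vtx ns pb cb) (U j)"
    using a_eq b_eq Li Uj i_le_j j_less by (simp_all add: in_bead_iff bead_vertex_def)
  then have a_cases: "(pa = i \<and> ca = L i) \<or> pa = Suc i"
    and b_cases: "(pb = j \<and> cb = U j) \<or> (pb = Suc j \<and> cb = bot_v (ns ! pb) \<and> U j = top_v (ns ! j))"
    by (auto simp: in_bead_canonical_iff[OF gluable a_can] in_bead_canonical_iff[OF gluable b_can])
  have w: "length w = ns ! k" "k < length ns"
    using k_can by (simp_all add: canonical_def bead_vertex_def)
  show thesis
  proof (cases "k \<le> j")
    case True
    have "i \<le> k" using a_cases ak by (auto simp: lex_le_def)
    moreover have "vle (L k) w"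
    proof (cases "k = i")
      case False
      with \<open>i \<le> k\<close> True show ?thesis by (simp add: L_bot bot_v_vle_iff w)
    qed (use a_cases ak in \<open>auto simp: lex_le_def\<close>)
    moreover have "vle w (U k)"
    proof (cases "k = j")
      case True
      with b_cases kb w show ?thesis by (auto simp: lex_le_def vle_top_v_iff)
    qed (use True \<open>i \<le> k\<close> in \<open>simp add: U_top vle_top_v_iff w\<close>)
    ultimately show thesis using that True x_eq by blast
  next
    case False
    with b_cases kb have "k = Suc j" "w = bot_v (ns ! k)" "U j = top_v (ns ! j)"
      by (auto simp: lex_le_def vle_bot_v_iff)
    then have "x = vtx ns j (top_v (ns ! j))"
      using x_eq w by (simp add: vtx_top_eq_bot[OF gluable])
    then show thesis
      using that[of j "top_v (ns ! j)"] i_le_j Uj \<open>U j = top_v (ns ! j)\<close>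
      by (simp add: vle_top_v_iff interval)
  qed
qed

lemma face_in_chain:
  assumes l: "l < length ns" and u: "length u = ns ! l" and uv: "vle u v" "u \<noteq> v"
    and a: "prec ns (vtx ns i (L i)) (vtx ns l u)" and b: "prec ns (vtx ns l v) (vtx ns j (U j))"
  shows "i \<le> l \<and> l \<le> j \<and> vle (L l) u \<and> vle v (U l)"
proof -
  have v: "length v = ns ! l" using uv u by (simp add: vle_length)
  have "prec ns (vtx ns l u) (vtx ns l v)"
    using l u v uv by (intro prec_bead) (simp_all add: bead_vertex_def)
  then have a': "prec ns (vtx ns i (L i)) (vtx ns l v)" and b': "prec ns (vtx ns l u) (vtx ns j (U j))"
    using a b prec_trans[OF gluable] by blast+
  obtain l0 w0 where l0: "i \<le> l0" "l0 \<le> j" "vtx ns l u = vtx ns l0 w0" "vle (L l0) w0"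
    using vertex_in_chain[OF a b'] by metis
  obtain l1 w1 where l1: "i \<le> l1" "l1 \<le> j" "vtx ns l v = vtx ns l1 w1" "vle w1 (U l1)"
    using vertex_in_chain[OF a' b] by metis
  have lower: "(l0 = l \<and> w0 = u) \<or> (l = Suc l0 \<and> u = bot_v (ns ! l))"
    using l0(3) uv by (auto simp: vtx_eq_iff[OF gluable] top_v_vle_iff)
  have upper: "(l1 = l \<and> w1 = v) \<or> (l1 = Suc l \<and> v = top_v (ns ! l))"
    using l1(3) uv by (auto simp: vtx_eq_iff[OF gluable] vle_bot_v_iff)
  from lower upper l0 l1 u v show ?thesis
    by (auto simp: L_bot U_top bot_v_vle_iff vle_top_v_iff)
qed

lemma cube_in_chain:
  assumes l: "l < length ns" and \<sigma>: "box_hom m (ns ! l) \<sigma>"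
    and a: "prec ns (vtx ns i (L i)) (vtx ns l (\<sigma> (bot_v m)))"
    and b: "prec ns (vtx ns l (\<sigma> (top_v m))) (vtx ns j (U j))"
  obtains l' \<sigma>' where "i \<le> l'" "l' \<le> j" "box_hom m (ns ! l') \<sigma>'" "bcell ns m l \<sigma> = bcell ns m l' \<sigma>'"
    "\<And>x. length x = m \<Longrightarrow> vle (L l') (\<sigma>' x) \<and> vle (\<sigma>' x) (U l')"
proof -
  let ?u = "\<sigma> (bot_v m)" and ?v = "\<sigma> (top_v m)"
  have between: "vle ?u (\<sigma> x) \<and> vle (\<sigma> x) ?v" if "length x = m" for x
    using box_hom_mono[OF \<sigma>] that by (simp add: bot_v_vle_iff vle_top_v_iff)
  have u: "length ?u = ns ! l" using box_hom_length[OF \<sigma>] by simp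
  show thesis
  proof (cases "?u = ?v")
    case False
    with face_in_chain[OF l u _ _ a b] between[of "top_v m"]
    have "i \<le> l" "l \<le> j" "vle (L l) ?u" "vle ?v (U l)" by auto
    then show thesis
      using that[OF _ _ \<sigma> refl] between vle_trans by meson
  next
    case True
    have \<sigma>_const: "\<sigma> = constv m ?u"
    proof (rule box_hom_eqI[OF \<sigma>])
      show "box_hom m (ns ! l) (constv m ?u)" by (rule box_hom_constv[OF u])
    qed (use between True vle_antisym in \<open>fastforce simp: constv_def hext_apply\<close>)
    obtain l' w where l': "i \<le> l'" "l' \<le> j" "vtx ns l ?u = vtx ns l' w" "vle (L l') w" "vle w (U l')"
      using vertex_in_chain[OF a] b True by metis
    have "length w = ns ! l'" using interval[OF l'(1,2)] l'(4) by (simp add: vle_length)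
    moreover have "bcell ns m l \<sigma> = bcell ns m l' (constv m w)"
      by (subst \<sigma>_const) (rule bcell_constv_eq[OF gluable l'(3)])
    ultimately show thesis
      using that[OF l'(1,2) box_hom_constv] l'(4,5) by (simp add: constv_def hext_apply)
  qed
qed

lemma incl_covers:
  assumes l: "l < length ns" and \<sigma>: "box_hom m (ns ! l) \<sigma>"
    and a: "prec ns (vtx ns i (L i)) (vtx ns l (\<sigma> (bot_v m)))"
    and b: "prec ns (vtx ns l (\<sigma> (top_v m))) (vtx ns j (U j))"
  shows "bcell ns m l \<sigma> \<in> incl m ` cells (wedge dims) m"
proof -
  obtain l' \<sigma>' where l': "i \<le> l'" "l' \<le> j" and \<sigma>': "box_hom m (ns ! l') \<sigma>'"
    and eq: "bcell ns m l \<sigma> = bcell ns m l' \<sigma>'"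
    and between: "\<And>x. length x = m \<Longrightarrow> vle (L l') (\<sigma>' x) \<and> vle (\<sigma>' x) (U l')"
    using cube_in_chain[OF l \<sigma> a b] by blast
  define p where "p = l' - i"
  have p: "p \<le> j - i" "l' = i + p" using l' by (auto simp: p_def)
  have "length (L l') = ns ! l'" "length (U l') = ns ! l'"
    using interval[OF l'] by (auto simp: vle_length)
  then obtain \<tau> where \<tau>: "box_hom m (vdist (L l') (U l')) \<tau>" and \<sigma>'_eq: "\<sigma>' = hext m (iota (L l') (U l') \<circ> \<tau>)"
    using box_hom_factor_iota[OF \<sigma>' _ _ between] by blast
  have "bcell dims m p \<tau> \<in> cells (wedge dims) m"
    using \<tau> p by (intro bcell_in_cells) (simp_all add: length_dims nth_dims)
  moreover have "bcell ns m l \<sigma> = incl m (bcell dims m p \<tau>)"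
    using \<tau> p eq \<sigma>'_eq by (simp add: incl_bcell nth_dims)
  ultimately show ?thesis by blast
qed

theorem nec_terminal_incl: "nec_terminal (wedge ns) (vtx ns i (L i)) (vtx ns j (U j)) dims incl"
  by (rule nec_terminalI[OF necklace nec_obj_incl inj_incl incl_covers])

end

lemma last_bead_canonical:
  assumes g: "gluable ns" and c: "canonical ns p c"
  shows "(GREATEST k. \<exists>u. in_bead ns k (vtx ns p c) u) = p"
    and "(THE u. in_bead ns p (vtx ns p c) u) = c"
  by (rule Greatest_equality the_equality; auto simp: in_bead_canonical_iff[OF g c])+

lemma first_bead_canonical:
  assumes g: "gluable ns" and c: "canonical ns p c"
  defines "q \<equiv> if c = bot_v (ns ! p) \<and> 0 < p then p - 1 else p"
    and "d \<equiv> if c = bot_v (ns ! p) \<and> 0 < p then top_v (ns ! (p - 1)) else c"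
  shows "(LEAST k. \<exists>v. in_bead ns k (vtx ns p c) v) = q"
    and "(THE v. in_bead ns q (vtx ns p c) v) = d"
    and "in_bead ns q (vtx ns p c) d"
proof -
  show d: "in_bead ns q (vtx ns p c) d"
    unfolding q_def d_def in_bead_canonical_iff[OF g c] by auto
  show "(LEAST k. \<exists>v. in_bead ns k (vtx ns p c) v) = q"
    by (rule Least_equality) (use d in \<open>auto simp: in_bead_canonical_iff[OF g c] q_def\<close>)
  show "(THE v. in_bead ns q (vtx ns p c) v) = d"
    by (rule the_equality) (use d in \<open>auto simp: in_bead_canonical_iff[OF g c] q_def d_def\<close>)
qed

lemma upt_Suc_Cons_snoc: "i < j \<Longrightarrow> [i..<Suc j] = i # [Suc i..<j] @ [j]"
  using upt_conv_Cons[of i j] by simp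

lemma chain_data_distinct_beads:
  assumes N: "necklace ns" and pq: "p < q" "q < length ns"
    and c: "length c = ns ! p" "c \<noteq> top_v (ns ! p)" and d: "length d = ns ! q" "d \<noteq> bot_v (ns ! q)"
  defines "L \<equiv> \<lambda>l. if l = p then c else bot_v (ns ! l)"
    and "U \<equiv> \<lambda>l. if l = q then d else top_v (ns ! l)"
  shows "interval_chain ns p q L U"
    and "interval_chain.chain_data ns p q L U =
      (vdist c (top_v (ns ! p)), bcell ns (vdist c (top_v (ns ! p))) p (iota c (top_v (ns ! p))))
      # map (\<lambda>l. (ns ! l, bcell ns (ns ! l) l (hext (ns ! l) id))) [Suc p..<q]
      @ [(vdist (bot_v (ns ! q)) d, bcell ns (vdist (bot_v (ns ! q)) d) q (iota (bot_v (ns ! q)) d))]"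
    (is "_ = ?list")
proof -
  show chain: "interval_chain ns p q L U"
    using N pq c d by unfold_locales (auto simp: L_def U_def vle_top_v_iff bot_v_vle_iff)
  have "L l = bot_v (ns ! l) \<and> U l = top_v (ns ! l)" if "l \<in> set [Suc p..<q]" for l
    using that by (simp add: L_def U_def)
  then show "interval_chain.chain_data ns p q L U = ?list"
    unfolding interval_chain.chain_data_def[OF chain] upt_Suc_Cons_snoc[OF pq(1)]
    using pq(1) by (simp add: L_def U_def vdist_bot_top iota_bot_top cong: map_cong)
qed

lemma sub_data_distinct_beads:
  assumes N: "necklace ns" and P: "prec ns a b"
    and apart: "\<not> (\<exists>i u v. in_bead ns i a u \<and> in_bead ns i b v \<and> vle u v)"
  obtains i j L U where "interval_chain ns i j L U" "a = vtx ns i (L i)" "b = vtx ns j (U j)"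
    "sub_data ns a b = interval_chain.chain_data ns i j L U"
proof -
  have g: "gluable ns" using N by (rule necklace_gluable)
  obtain pa ca pb cb where a_can: "canonical ns pa ca" and b_can: "canonical ns pb cb"
    and a: "a = vtx ns pa ca" and b: "b = vtx ns pb cb" and ab: "lex_le (pa, ca) (pb, cb)"
    using prec_canonicalE[OF g P] by metis
  define j0 where "j0 = (if cb = bot_v (ns ! pb) \<and> 0 < pb then pb - 1 else pb)"
  define v0 where "v0 = (if cb = bot_v (ns ! pb) \<and> 0 < pb then top_v (ns ! (pb - 1)) else cb)"
  note first_b = first_bead_canonical[OF g b_can, folded j0_def v0_def, folded b]
  note last_a = last_bead_canonical[OF g a_can, folded a]
  have lens: "pa < length ns" "length ca = ns ! pa" "pb < length ns" "length cb = ns ! pb"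
    using a_can b_can by (auto simp: canonical_def bead_vertex_def)
  have v0: "length v0 = ns ! j0" "j0 \<le> pb" "j0 < length ns"
    using lens by (auto simp: v0_def j0_def)
  have a_in: "in_bead ns pa a ca" and b_in: "in_bead ns pb b cb"
    using a b lens by (simp_all add: in_bead_iff bead_vertex_def)
  have "pa < pb"
  proof (rule ccontr)
    assume "\<not> pa < pb"
    with ab have "pa = pb" "vle ca cb" by (auto simp: lex_le_def)
    with a_in b_in apart show False by blast
  qed
  have "pa < j0"
  proof (rule ccontr)
    assume "\<not> pa < j0"
    with \<open>pa < pb\<close> have "j0 = pa" "v0 = top_v (ns ! j0)"
      by (auto simp: j0_def v0_def split: if_splits)
    moreover have "vle ca (top_v (ns ! pa))" using lens(2) by (simp add: vle_top_v_iff)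
    ultimately show False
      using a_in first_b(3) apart by auto
  qed
  have pos: "0 < ns ! k" if "k < length ns" for k
    using N that \<open>pa < j0\<close> v0(2) lens(3) by (auto simp: necklace_def)
  have ca: "ca \<noteq> top_v (ns ! pa)"
    using a_can \<open>pa < j0\<close> v0(2) lens(3) by (auto simp: canonical_def)
  have v0_ne: "v0 \<noteq> bot_v (ns ! j0)"
    using \<open>pa < j0\<close> pos[of "pb - 1"] lens(3) by (auto simp: v0_def j0_def top_ne_bot)
  note chain = chain_data_distinct_beads[OF N \<open>pa < j0\<close> _ lens(2) ca v0(1) v0_ne]
  have "sub_data ns a b = interval_chain.chain_data ns pa j0
      (\<lambda>l. if l = pa then ca else bot_v (ns ! l)) (\<lambda>l. if l = j0 then v0 else top_v (ns ! l))"
    unfolding sub_data_def if_not_P[OF apart] Let_def last_a first_b(1,2) chain(2)[OF v0(3)] ..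
  moreover have "a = vtx ns pa ca" "b = vtx ns j0 v0"
    using a first_b(3) by (simp_all add: in_bead_iff)
  ultimately show thesis
    using that[OF chain(1)[OF v0(3)]] by simp
qed

lemma sub_data_interval_chain:
  assumes N: "necklace ns" and P: "prec ns a b"
  obtains i j L U where "interval_chain ns i j L U" "a = vtx ns i (L i)" "b = vtx ns j (U j)"
    "sub_data ns a b = interval_chain.chain_data ns i j L U"
proof (cases "\<exists>i u v. in_bead ns i a u \<and> in_bead ns i b v \<and> vle u v")
  case True
  define S where "S = (SOME (i, u, v). in_bead ns i a u \<and> in_bead ns i b v \<and> vle u v)"
  have "\<exists>t. (\<lambda>(i, u, v). in_bead ns i a u \<and> in_bead ns i b v \<and> vle u v) t"
    using True by auto
  then have "(\<lambda>(i, u, v). in_bead ns i a u \<and> in_bead ns i b v \<and> vle u v) S"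
    unfolding S_def by (rule someI_ex)
  then obtain i u v where S: "S = (i, u, v)" and a: "in_bead ns i a u" and b: "in_bead ns i b v"
    and uv: "vle u v"
    by (cases S) auto
  have chain: "interval_chain ns i i (\<lambda>_. u) (\<lambda>_. v)"
    using N a uv by unfold_locales (auto simp: in_bead_def)
  have "sub_data ns a b = [(vdist u v, bcell ns (vdist u v) i (iota u v))]"
    unfolding sub_data_def if_P[OF True] S_def[symmetric] S by simp
  also have "\<dots> = interval_chain.chain_data ns i i (\<lambda>_. u) (\<lambda>_. v)"
    by (simp add: interval_chain.chain_data_def[OF chain])
  finally show thesis
    using that[OF chain] a b by (simp add: in_bead_iff)
next
  case False
  show thesis by (rule sub_data_distinct_beads[OF N P False that])
qed

theorem proposition2p8:
  fixes ns :: "nat list" and a b :: ncell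
  assumes "necklace ns" and "prec ns a b"
  shows "nec_terminal (wedge ns) a b (sub_dims ns a b) (sub_iota ns a b)"
proof -
  obtain i j L U where chain: "interval_chain ns i j L U"
    and a: "a = vtx ns i (L i)" and b: "b = vtx ns j (U j)"
    and sub_data: "sub_data ns a b = interval_chain.chain_data ns i j L U"
    using sub_data_interval_chain[OF assms] by blast
  have "sub_dims ns a b = interval_chain.dims ns i j L U"
    and "sub_iota ns a b = interval_chain.incl ns i j L U"
    by (simp_all add: sub_dims_def sub_iota_def sub_data
        interval_chain.dims_def[OF chain] interval_chain.incl_def[OF chain])
  with interval_chain.nec_terminal_incl[OF chain] show ?thesis
    by (simp add: a b)
qed

end
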